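(* Let $\rho\in(0,\infty)$ and $d=d(L)$ with $dL\to\theta\in[0,\infty)$. For every $H\in\mathcal D(\mathcal L_\theta)$, $$\lim_{N/L\to\rho}\ \sup_{\eta\in\Omega_{L,N}}\Big|\mathfrak L_{L,N}\big(H\circ\mu_{L,N}^{(\cdot)}\big)(\eta)-(\mathcal L_\theta H)(\mu_{L,N}^{(\eta)})\Big|=0.$$
   Context: Inclusion process: $\Omega_{L,N}=\{\eta\in\mathbb N_0^L:\sum_x\eta_x=N\}$, $\mathfrak L_{L,N}f(\eta)=\sum_{x\ne y}\eta_x(d+\eta_y)[f(\eta^{x,y})-f(\eta)]$, $\eta^{x,y}=\eta-e^x+e^y$; "$N/L\to\rho$" means $N,L\to\infty$ with $N/L\to\rho$. $\mu^{(\eta)}_{L,N}=\sum_x\frac{\eta_x}N\delta_{\eta_x/N}$. $\overline\nabla=\{p\in[0,1]^{\mathbb N}:p_1\ge p_2\ge\dots,\sum p_i\le1\}$, $\mu^{(p)}=(1-\|p\|_1)\delta_0+\sum_ip_i\delta_{p_i}$, $E=\{\mu^{(p)}:p\in\overline\nabla\}$ (note $\mu^{(\eta)}_{L,N}\in E$). $Bh=(zh)'$; $A_\theta h(z)=z(1-z)h''+(2-(2+\theta)z)h'+\theta(h(0)-h(z))$; $\mathcal D(\mathcal L_\theta)$ = subalgebra of $C(E)$ generated by $\mu\mapsto\mu(h)$, $h\in C^3([0,1])$, with $\mathcal L_\theta\prod_{k=1}^n\mu(h_k)=2\sum_{k<l}(\mu(Bh_kBh_l)-\mu(Bh_k)\mu(Bh_l))\prod_{j\ne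 k,l}\mu(h_j)+\sum_k\mu(A_\theta h_k)\prod_{j\ne k}\mu(h_j)$, extended linearly. *)

theory Defs
  imports "HOL-Analysis.Analysis"
begin

text \<open>Configurations: sites are 0..L-1; eta is extended by 0 outside the torus.\<close>
definition Omega :: "nat \<Rightarrow> nat \<Rightarrow> (nat \<Rightarrow> nat) set" where
  "Omega L N = {eta. (\<forall>x\<ge>L. eta x = 0) \<and> (\<Sum>x<L. eta x) = N}"

definition jump :: "(nat \<Rightarrow> nat) \<Rightarrow> nat \<Rightarrow> nat \<Rightarrow> (nat \<Rightarrow> nat)" where
  "jump eta x y = (eta(x := eta x - 1))(y := (eta(x := eta x - 1)) y + 1)"

definition gen :: "nat \<Rightarrow> real \<Rightarrow> ((nat \<Rightarrow> nat) \<Rightarrow> real) \<Rightarrow> (nat \<Rightarrow> nat) \<Rightarrow> real" where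
  "gen L d f eta = (\<Sum>x<L. \<Sum>y<L. if x \<noteq> y then
      real (eta x) * (d + real (eta y)) * (f (jump eta x y) - f eta) else 0)"

text \<open>Measures on [0,1] are represented by their integration functionals h \<mapsto> mu(h).
  The empirical measure mu^(eta)_{L,N} = sum_x eta_x/N delta_{eta_x/N}.\<close>
definition emp :: "nat \<Rightarrow> nat \<Rightarrow> (nat \<Rightarrow> nat) \<Rightarrow> (real \<Rightarrow> real) \<Rightarrow> real" where
  "emp L N eta h = (\<Sum>x<L. real (eta x) / real N * h (real (eta x) / real N))"

definition D01 :: "(real \<Rightarrow> real) \<Rightarrow> real \<Rightarrow> real" where
  "D01 h x = vector_derivative h (at x within {0..1})"

definition C3_01 :: "(real \<Rightarrow> real) \<Rightarrow> bool" where
  "C3_01 h \<longleftrightarrow> (\<exists>h1 h2 h3.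
     (\<forall>x\<in>{0..1}. (h has_real_derivative h1 x) (at x within {0..1}) \<and>
                  (h1 has_real_derivative h2 x) (at x within {0..1}) \<and>
                  (h2 has_real_derivative h3 x) (at x within {0..1})) \<and>
     continuous_on {0..1} h3)"

definition Bop :: "(real \<Rightarrow> real) \<Rightarrow> real \<Rightarrow> real" where
  "Bop h z = h z + z * D01 h z"

definition Aop :: "real \<Rightarrow> (real \<Rightarrow> real) \<Rightarrow> real \<Rightarrow> real" where
  "Aop \<theta> h z = z * (1 - z) * D01 (D01 h) z + (2 - (2 + \<theta>) * z) * D01 h z
               + \<theta> * (h 0 - h z)"

text \<open>An element of D(L_theta) given by a representation as a finite linear combination
  of products mu(h_1)...mu(h_n): a list of pairs (coefficient, [h_1,...,h_n]).\<close>
definition Hrep :: "(real \<times> (real \<Rightarrow> real) list) list \<Rightarrow> ((real \<Rightarrow> real) \<Rightarrow> real) \<Rightarrow> real" where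
  "Hrep R mu = (\<Sum>(c, hs) \<leftarrow> R. c * prod_list (map mu hs))"

definition Lprod :: "real \<Rightarrow> (real \<Rightarrow> real) list \<Rightarrow> ((real \<Rightarrow> real) \<Rightarrow> real) \<Rightarrow> real" where
  "Lprod \<theta> hs mu =
     2 * (\<Sum>k<length hs. \<Sum>l<length hs. if k < l then
           (mu (\<lambda>z. Bop (hs!k) z * Bop (hs!l) z) - mu (Bop (hs!k)) * mu (Bop (hs!l)))
           * (\<Prod>j\<in>{..<length hs} - {k, l}. mu (hs!j)) else 0)
     + (\<Sum>k<length hs. mu (Aop \<theta> (hs!k)) * (\<Prod>j\<in>{..<length hs} - {k}. mu (hs!j)))"

definition Ltheta :: "real \<Rightarrow> (real \<times> (real \<Rightarrow> real) list) list \<Rightarrow> ((real \<Rightarrow> real) \<Rightarrow> real) \<Rightarrow> real" where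
  "Ltheta \<theta> R mu = (\<Sum>(c, hs) \<leftarrow> R. c * Lprod \<theta> hs mu)"

end

theory Submission
  imports Defs
begin

text \<open>Put \<open>G v = v h v\<close>. Then \<open>\<mu>\<^sup>(\<^sup>\<eta>\<^sup>)(h) = \<Sum>\<^sub>x G(\<eta>\<^sub>x/N)\<close>, so every element of
  \<open>\<D>(\<L>\<^sub>\<theta>)\<close> is a polynomial in such site sums. A jump \<open>x \<rightarrow> y\<close> changes a site sum by
  \<open>\<Delta> = G((\<eta>\<^sub>x-1)/N) - G(\<eta>\<^sub>x/N) + G((\<eta>\<^sub>y+1)/N) - G(\<eta>\<^sub>y/N) = O(1/N)\<close>. Expanding a product of
  perturbed site sums, the terms linear in \<open>\<Delta>\<close> give, by second-order Taylor expansion, the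
  \<open>A\<^sub>\<theta>\<close> part of the generator (its diffusion part from the rates \<open>\<eta>\<^sub>x \<eta>\<^sub>y\<close>, its immigration part
  from \<open>d (L - 1) \<approx> \<theta>\<close>); the terms quadratic in \<open>\<Delta>\<close> give the covariance terms in \<open>B h = G'\<close>;
  terms with three or more factors \<open>\<Delta>\<close> are \<open>O(N\<^sup>-\<^sup>3)\<close> per jump against a total rate
  \<open>O(N\<^sup>2 + d L N)\<close>. All errors are bounded, uniformly in \<open>\<eta>\<close>, by a constant times
  \<open>1/N + \<bar>d L - \<theta>\<bar> + d + d L/N\<close>, which tends to \<open>0\<close>.\<close>

section \<open>Taylor estimates on a compact interval\<close>

lemma Icc_deriv_bound_lipschitz:
  fixes f f' :: "real \<Rightarrow> real"
  assumes "\<And>x. x \<in> {l..u} \<Longrightarrow> (f has_real_derivative f' x) (at x within {l..u})"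
    and "\<And>x. x \<in> {l..u} \<Longrightarrow> \<bar>f' x\<bar> \<le> M" and "a \<in> {l..u}" "b \<in> {l..u}"
  shows "\<bar>f b - f a\<bar> \<le> M * \<bar>b - a\<bar>"
  using field_differentiable_bound[of "{l..u}" f f' M b a] assms by auto

lemma Icc_taylor1_remainder:
  fixes f f' f'' :: "real \<Rightarrow> real"
  assumes d1: "\<And>x. x \<in> {l..u} \<Longrightarrow> (f has_real_derivative f' x) (at x within {l..u})"
    and d2: "\<And>x. x \<in> {l..u} \<Longrightarrow> (f' has_real_derivative f'' x) (at x within {l..u})"
    and bd: "\<And>x. x \<in> {l..u} \<Longrightarrow> \<bar>f'' x\<bar> \<le> M" and ab: "a \<in> {l..u}" "b \<in> {l..u}"
  shows "\<bar>f b - f a - (b - a) * f' a\<bar> \<le> M * (b - a)^2"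
proof -
  define S where "S = {min a b..max a b}"
  have S_sub: "S \<subseteq> {l..u}" using ab by (auto simp: S_def)
  have M0: "0 \<le> M" using bd[OF ab(1)] by linarith
  have "((\<lambda>s. f s - s * f' a) has_real_derivative (f' s - f' a)) (at s within S)" if "s \<in> S" for s
    using DERIV_subset[OF d1 S_sub] S_sub that by (auto intro!: derivative_eq_intros)
  moreover have "norm (f' s - f' a) \<le> M * \<bar>b - a\<bar>" if "s \<in> S" for s
  proof -
    have "\<bar>f' s - f' a\<bar> \<le> M * \<bar>s - a\<bar>"
      using Icc_deriv_bound_lipschitz[OF d2 bd ab(1)] S_sub that by auto
    also have "\<dots> \<le> M * \<bar>b - a\<bar>" using that M0 by (intro mult_left_mono) (auto simp: S_def)
    finally show ?thesis by simp
  qed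
  ultimately have "norm ((f b - b * f' a) - (f a - a * f' a)) \<le> M * \<bar>b - a\<bar> * norm (b - a)"
    by (intro field_differentiable_bound[of S]) (auto simp: S_def)
  then show ?thesis by (simp add: algebra_simps power2_eq_square abs_mult)
qed

lemma Icc_taylor2_remainder:
  fixes f f' f'' f''' :: "real \<Rightarrow> real"
  assumes d1: "\<And>x. x \<in> {l..u} \<Longrightarrow> (f has_real_derivative f' x) (at x within {l..u})"
    and d2: "\<And>x. x \<in> {l..u} \<Longrightarrow> (f' has_real_derivative f'' x) (at x within {l..u})"
    and d3: "\<And>x. x \<in> {l..u} \<Longrightarrow> (f'' has_real_derivative f''' x) (at x within {l..u})"
    and bd: "\<And>x. x \<in> {l..u} \<Longrightarrow> \<bar>f''' x\<bar> \<le> M" and ab: "a \<in> {l..u}" "b \<in> {l..u}"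
  shows "\<bar>f b - f a - (b - a) * f' a - (b - a)^2 / 2 * f'' a\<bar> \<le> M * \<bar>b - a\<bar>^3"
proof -
  define S where "S = {min a b..max a b}"
  have S_sub: "S \<subseteq> {l..u}" using ab by (auto simp: S_def)
  have M0: "0 \<le> M" using bd[OF ab(1)] by linarith
  have "((\<lambda>s. f s - s * f' a - (s - a)^2 / 2 * f'' a) has_real_derivative
      (f' s - f' a - (s - a) * f'' a)) (at s within S)" if "s \<in> S" for s
    using DERIV_subset[OF d1 S_sub] S_sub that
    by (auto intro!: derivative_eq_intros simp: field_simps)
  moreover have "norm (f' s - f' a - (s - a) * f'' a) \<le> M * \<bar>b - a\<bar>^2" if "s \<in> S" for s
  proof -
    have "\<bar>f' s - f' a - (s - a) * f'' a\<bar> \<le> M * (s - a)^2"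
      using Icc_taylor1_remainder[OF d2 d3 bd ab(1)] S_sub that by auto
    also have "\<dots> \<le> M * \<bar>b - a\<bar>^2"
      using that M0 by (intro mult_left_mono) (auto simp: S_def abs_le_square_iff[symmetric])
    finally show ?thesis by simp
  qed
  ultimately have "norm ((f b - b * f' a - (b - a)^2 / 2 * f'' a) - (f a - a * f' a - (a - a)^2 / 2 * f'' a))
      \<le> M * \<bar>b - a\<bar>^2 * norm (b - a)"
    by (intro field_differentiable_bound[of S]) (auto simp: S_def)
  then show ?thesis by (simp add: algebra_simps power3_eq_cube power2_eq_square abs_mult)
qed

section \<open>Finite sums and products\<close>

lemma abs_sum_diff_le:
  fixes f g c :: "'a \<Rightarrow> real"
  assumes "\<And>x. x \<in> A \<Longrightarrow> \<bar>f x - g x\<bar> \<le> c x"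
  shows "\<bar>sum f A - sum g A\<bar> \<le> sum c A"
  unfolding sum_subtractf[symmetric] using assms by (rule order_trans[OF sum_abs sum_mono])

lemma sum_off_diagonal_product:
  fixes a b :: "'a \<Rightarrow> real"
  assumes "finite A"
  shows "(\<Sum>x\<in>A. \<Sum>y\<in>A. if x \<noteq> y then a x * b y else 0) = sum a A * sum b A - (\<Sum>x\<in>A. a x * b x)"
proof -
  have "(\<Sum>y\<in>A. if x \<noteq> y then a x * b y else 0) = a x * sum b A - a x * b x" if "x \<in> A" for x
  proof -
    have "(\<Sum>y\<in>A. if x \<noteq> y then a x * b y else 0) = (\<Sum>y\<in>A - {x}. if x \<noteq> y then a x * b y else 0)"
      using sum.remove[OF assms that, of "\<lambda>y. if x \<noteq> y then a x * b y else 0"] by simp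
    also have "\<dots> = (\<Sum>y\<in>A - {x}. a x * b y)" by (rule sum.cong) auto
    also have "\<dots> = a x * sum b A - a x * b x"
      using sum.remove[OF assms that, of "\<lambda>y. a x * b y"] by (simp add: sum_distrib_left)
    finally show ?thesis .
  qed
  then show ?thesis by (simp add: sum_subtractf sum_distrib_right)
qed

lemma double_sum_product_of_differences:
  fixes u g k :: "'a \<Rightarrow> real"
  assumes "sum u A = 1"
  shows "(\<Sum>x\<in>A. \<Sum>y\<in>A. u x * u y * ((g y - g x) * (k y - k x)))
     = 2 * ((\<Sum>x\<in>A. u x * (g x * k x)) - (\<Sum>x\<in>A. u x * g x) * (\<Sum>x\<in>A. u x * k x))"
proof -
  have e: "u x * u y * ((g y - g x) * (k y - k x)) = u x * (u y * (g y * k y)) + u y * (u x * (g x * k x))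
      - (u x * g x) * (u y * k y) - (u y * g y) * (u x * k x)" for x y
    by (simp add: algebra_simps)
  have "(\<Sum>x\<in>A. \<Sum>y\<in>A. u x * (u y * (g y * k y))) = (\<Sum>x\<in>A. u x * (g x * k x))"
    "(\<Sum>x\<in>A. \<Sum>y\<in>A. u y * (u x * (g x * k x))) = (\<Sum>x\<in>A. u x * (g x * k x))"
    using assms by (simp_all add: sum_distrib_left[symmetric] sum_distrib_right[symmetric])
  moreover have "(\<Sum>x\<in>A. \<Sum>y\<in>A. (u x * g x) * (u y * k y)) = (\<Sum>x\<in>A. u x * g x) * (\<Sum>x\<in>A. u x * k x)"
    "(\<Sum>x\<in>A. \<Sum>y\<in>A. (u y * g y) * (u x * k x)) = (\<Sum>x\<in>A. u x * g x) * (\<Sum>x\<in>A. u x * k x)"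
    by (simp add: sum_product) (subst sum.swap, simp add: sum_product)
  ultimately show ?thesis unfolding e by (simp add: sum_subtractf sum.distrib)
qed

lemma prod_add_diff_prod:
  fixes F D :: "'a \<Rightarrow> 'b::comm_ring_1"
  assumes "finite A"
  shows "(\<Prod>k\<in>A. F k + D k) - (\<Prod>k\<in>A. F k) = (\<Sum>S\<in>Pow A - {{}}. (\<Prod>k\<in>S. D k) * (\<Prod>k\<in>A - S. F k))"
proof -
  have "(\<Prod>k\<in>A. F k + D k) = (\<Sum>S\<in>Pow A. (\<Prod>k\<in>S. D k) * (\<Prod>k\<in>A - S. F k))"
    using prod_add[OF assms, of D F] by (simp add: add.commute)
  also have "\<dots> = (\<Prod>k\<in>{}. D k) * (\<Prod>k\<in>A - {}. F k) + (\<Sum>S\<in>Pow A - {{}}. (\<Prod>k\<in>S. D k) * (\<Prod>k\<in>A - S. F k))"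
    by (rule sum.remove) (use assms in auto)
  finally show ?thesis by simp
qed

lemma sum_nonempty_subsets_by_card:
  fixes A :: "'a::linorder set" and f :: "'a set \<Rightarrow> 'b::comm_monoid_add"
  assumes A: "finite A"
  shows "(\<Sum>S\<in>Pow A - {{}}. f S) = (\<Sum>k\<in>A. f {k}) + (\<Sum>k\<in>A. \<Sum>l\<in>A. if k < l then f {k, l} else 0)
    + (\<Sum>S\<in>{S \<in> Pow A. 3 \<le> card S}. f S)"
proof -
  define P1 where "P1 = (\<lambda>k. {k}) ` A"
  define PP where "PP = {p \<in> A \<times> A. fst p < snd p}"
  define P2 where "P2 = (\<lambda>p. {fst p, snd p}) ` PP"
  define P3 where "P3 = {S \<in> Pow A. 3 \<le> card S}"
  have card12: "S \<in> P1 \<Longrightarrow> card S = 1" "S \<in> P2 \<Longrightarrow> card S = 2" for S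
    by (auto simp: P1_def P2_def PP_def)
  have "Pow A - {{}} = P1 \<union> P2 \<union> P3"
  proof
    show "Pow A - {{}} \<subseteq> P1 \<union> P2 \<union> P3"
    proof
      fix S assume S: "S \<in> Pow A - {{}}"
      then have "finite S" "S \<noteq> {}" using A finite_subset by auto
      then have "card S \<noteq> 0" by simp
      then consider "card S = 1" | "card S = 2" | "3 \<le> card S" by linarith
      then show "S \<in> P1 \<union> P2 \<union> P3"
      proof cases
        case 1
        then show ?thesis using S by (auto simp: P1_def card_1_singleton_iff)
      next
        case 2
        then obtain a b where ab: "S = {a, b}" "a \<noteq> b" using card_2_iff by metis
        then have "(min a b, max a b) \<in> PP" "S = {fst (min a b, max a b), snd (min a b, max a b)}"
          using S by (auto simp: PP_def min_def max_def)
        then show ?thesis unfolding P2_def by blast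
      qed (use S in \<open>auto simp: P3_def\<close>)
    qed
    show "P1 \<union> P2 \<union> P3 \<subseteq> Pow A - {{}}" by (auto simp: P1_def P2_def PP_def P3_def)
  qed
  moreover have "finite P1" "finite P2" "finite P3" using A by (auto simp: P1_def P2_def PP_def P3_def)
  moreover have "P1 \<inter> P2 = {}" "(P1 \<union> P2) \<inter> P3 = {}" using card12 by (fastforce simp: P3_def)+
  ultimately have "(\<Sum>S\<in>Pow A - {{}}. f S) = sum f P1 + sum f P2 + sum f P3"
    by (simp add: sum.union_disjoint)
  moreover have "sum f P1 = (\<Sum>k\<in>A. f {k})"
    unfolding P1_def by (rule sum.reindex_cong[where l="\<lambda>k. {k}"]) (auto simp: inj_on_def)
  moreover have "sum f P2 = (\<Sum>k\<in>A. \<Sum>l\<in>A. if k < l then f {k, l} else 0)"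
  proof -
    have "sum f P2 = (\<Sum>p\<in>PP. f {fst p, snd p})"
      unfolding P2_def by (rule sum.reindex_cong) (auto simp: inj_on_def PP_def doubleton_eq_iff)
    also have "\<dots> = (\<Sum>p\<in>A \<times> A. if fst p < snd p then f {fst p, snd p} else 0)"
      unfolding PP_def by (rule sum.inter_filter) (simp add: A)
    finally show ?thesis by (simp add: sum.cartesian_product case_prod_unfold)
  qed
  ultimately show ?thesis by (simp add: P3_def)
qed

lemma prod_list_map_eq_prod_lessThan: "prod_list (map f xs) = (\<Prod>k<length xs. f (xs ! k))"
  by (induction xs) (simp_all add: prod.lessThan_Suc_shift del: prod.lessThan_Suc)

section \<open>Profiles and their difference quotients\<close>

definition diff_down :: "(real \<Rightarrow> real) \<Rightarrow> nat \<Rightarrow> nat \<Rightarrow> real" where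
  "diff_down G N e = G ((real e - 1) / real N) - G (real e / real N)"

definition diff_up :: "(real \<Rightarrow> real) \<Rightarrow> nat \<Rightarrow> nat \<Rightarrow> real" where
  "diff_up G N e = G ((real e + 1) / real N) - G (real e / real N)"

text \<open>For \<open>eta x = 0\<close>, \<open>jump_incr\<close> evaluates \<open>G\<close> at \<open>-1/N\<close>; such terms always carry the rate factor
  \<open>eta x = 0\<close>, so estimates on jump increments only assume \<open>1 \<le> eta x\<close>.\<close>

definition jump_incr :: "(real \<Rightarrow> real) \<Rightarrow> nat \<Rightarrow> (nat \<Rightarrow> nat) \<Rightarrow> nat \<Rightarrow> nat \<Rightarrow> real" where
  "jump_incr G N eta x y = diff_down G N (eta x) + diff_up G N (eta y)"

lemma divide_of_nat_in_unit_interval: "0 < N \<Longrightarrow> 0 \<le> a \<Longrightarrow> a \<le> real N \<Longrightarrow> a / real N \<in> {0..1}"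
  by (auto simp: divide_simps)

text \<open>\<open>G\<close> stands for \<open>v \<mapsto> v h v\<close> with \<open>h \<in> C\<^sup>3[0,1]\<close>; hence \<open>G 0 = 0\<close> and the bound \<open>\<bar>G x\<bar> \<le> M x\<close>.\<close>

locale C3_profile =
  fixes G G1 G2 G3 :: "real \<Rightarrow> real" and M :: real
  assumes deriv: "x \<in> {0..1} \<Longrightarrow> (G has_real_derivative G1 x) (at x within {0..1})"
    and deriv1: "x \<in> {0..1} \<Longrightarrow> (G1 has_real_derivative G2 x) (at x within {0..1})"
    and deriv2: "x \<in> {0..1} \<Longrightarrow> (G2 has_real_derivative G3 x) (at x within {0..1})"
    and bound: "x \<in> {0..1} \<Longrightarrow> \<bar>G x\<bar> \<le> M * x"
    and bound1: "x \<in> {0..1} \<Longrightarrow> \<bar>G1 x\<bar> \<le> M"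
    and bound2: "x \<in> {0..1} \<Longrightarrow> \<bar>G2 x\<bar> \<le> M"
    and bound3: "x \<in> {0..1} \<Longrightarrow> \<bar>G3 x\<bar> \<le> M"
    and one_le_bound: "1 \<le> M"

lemma C3_profile_mono: "C3_profile G G1 G2 G3 M \<Longrightarrow> M \<le> M' \<Longrightarrow> C3_profile G G1 G2 G3 M'"
  unfolding C3_profile_def
  by (smt (verit, best) atLeastAtMost_iff mult_right_mono)

context C3_profile
begin

context
  fixes N :: nat
  assumes N: "0 < N"
begin

lemma diff_down_approx:
  assumes "1 \<le> e" "e \<le> N"
  shows "\<bar>diff_down G N e + G1 (real e / real N) / real N\<bar> \<le> M / real N ^ 2"
proof -
  have "(real e - 1) / real N - real e / real N = - 1 / real N" using N by (simp add: field_simps)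
  moreover have "\<bar>G ((real e - 1) / real N) - G (real e / real N)
      - ((real e - 1) / real N - real e / real N) * G1 (real e / real N)\<bar>
     \<le> M * ((real e - 1) / real N - real e / real N)^2"
    using assms N by (intro Icc_taylor1_remainder[OF deriv deriv1 bound2] divide_of_nat_in_unit_interval) auto
  ultimately show ?thesis by (simp add: diff_down_def power_divide)
qed

lemma diff_up_approx:
  assumes "e + 1 \<le> N"
  shows "\<bar>diff_up G N e - G1 (real e / real N) / real N\<bar> \<le> M / real N ^ 2"
proof -
  have "(real e + 1) / real N - real e / real N = 1 / real N" using N by (simp add: field_simps)
  moreover have "\<bar>G ((real e + 1) / real N) - G (real e / real N)
      - ((real e + 1) / real N - real e / real N) * G1 (real e / real N)\<bar>
     \<le> M * ((real e + 1) / real N - real e / real N)^2"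
    using assms N by (intro Icc_taylor1_remainder[OF deriv deriv1 bound2] divide_of_nat_in_unit_interval) auto
  ultimately show ?thesis by (simp add: diff_up_def power_divide)
qed

lemma diff_down_up_approx:
  assumes "1 \<le> e" "e + 1 \<le> N"
  shows "\<bar>diff_down G N e + diff_up G N e - G2 (real e / real N) / real N ^ 2\<bar> \<le> 2 * M / real N ^ 3"
proof -
  let ?a = "real e / real N"
  have a: "?a \<in> {0..1}" using assms N by (intro divide_of_nat_in_unit_interval) auto
  have down: "(real e - 1) / real N - ?a = - (1 / real N)"
    and up: "(real e + 1) / real N - ?a = 1 / real N" using N by (simp_all add: field_simps)
  have "\<bar>G ((real e - 1) / real N) - G ?a - ((real e - 1) / real N - ?a) * G1 ?a
       - ((real e - 1) / real N - ?a)^2 / 2 * G2 ?a\<bar> \<le> M * \<bar>(real e - 1) / real N - ?a\<bar>^3"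
    using assms N a by (intro Icc_taylor2_remainder[OF deriv deriv1 deriv2 bound3] divide_of_nat_in_unit_interval) auto
  moreover have "\<bar>G ((real e + 1) / real N) - G ?a - ((real e + 1) / real N - ?a) * G1 ?a
       - ((real e + 1) / real N - ?a)^2 / 2 * G2 ?a\<bar> \<le> M * \<bar>(real e + 1) / real N - ?a\<bar>^3"
    using assms N a by (intro Icc_taylor2_remainder[OF deriv deriv1 deriv2 bound3] divide_of_nat_in_unit_interval) auto
  moreover have "diff_down G N e + diff_up G N e - G2 ?a / real N ^ 2 =
     (G ((real e - 1) / real N) - G ?a - ((real e - 1) / real N - ?a) * G1 ?a
       - ((real e - 1) / real N - ?a)^2 / 2 * G2 ?a) +
     (G ((real e + 1) / real N) - G ?a - ((real e + 1) / real N - ?a) * G1 ?a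
       - ((real e + 1) / real N - ?a)^2 / 2 * G2 ?a)"
    unfolding down up diff_down_def diff_up_def by (simp add: power2_eq_square field_simps)
  ultimately have "\<bar>diff_down G N e + diff_up G N e - G2 ?a / real N ^ 2\<bar>
      \<le> M * \<bar>- (1 / real N)\<bar>^3 + M * \<bar>1 / real N\<bar>^3"
    unfolding down up by (smt (verit) abs_triangle_ineq)
  then show ?thesis by (simp add: power_divide)
qed

lemma abs_diff_down_le:
  assumes "1 \<le> e" "e \<le> N"
  shows "\<bar>diff_down G N e\<bar> \<le> 2 * M / real N"
proof -
  have "\<bar>G1 (real e / real N)\<bar> \<le> M"
    using assms N by (intro bound1 divide_of_nat_in_unit_interval) auto
  then have "\<bar>G1 (real e / real N) / real N\<bar> \<le> M / real N"
    by (simp only: abs_divide) (simp add: divide_right_mono)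
  moreover have "M / real N ^ 2 \<le> M / real N"
    using N one_le_bound by (simp add: divide_left_mono power2_eq_square)
  moreover have "2 * M / real N = M / real N + M / real N" by simp
  ultimately show ?thesis using diff_down_approx[OF assms] by linarith
qed

lemma abs_diff_up_le:
  assumes "e + 1 \<le> N"
  shows "\<bar>diff_up G N e\<bar> \<le> 2 * M / real N"
proof -
  have "\<bar>G1 (real e / real N)\<bar> \<le> M"
    using assms N by (intro bound1 divide_of_nat_in_unit_interval) auto
  then have "\<bar>G1 (real e / real N) / real N\<bar> \<le> M / real N"
    by (simp only: abs_divide) (simp add: divide_right_mono)
  moreover have "M / real N ^ 2 \<le> M / real N"
    using N one_le_bound by (simp add: divide_left_mono power2_eq_square)
  moreover have "2 * M / real N = M / real N + M / real N" by simp
  ultimately show ?thesis using diff_up_approx[OF assms] by linarith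
qed

lemma occupied_diff_down_up_approx:
  assumes "e \<le> N"
  shows "\<bar>real e * (real N - real e) * (diff_down G N e + diff_up G N e)
     - real e / real N * (1 - real e / real N) * G2 (real e / real N)\<bar> \<le> 2 * M * real e / real N ^ 2"
proof (cases "e = 0 \<or> e = N")
  case True
  then show ?thesis using N one_le_bound by auto
next
  case False
  then have e: "1 \<le> e" "e + 1 \<le> N" using assms by auto
  have w: "0 \<le> real e * (real N - real e)" "real e * (real N - real e) \<le> real e * real N"
    using assms by (auto simp: right_diff_distrib intro: mult_left_mono)
  have "real e * (real N - real e) * (diff_down G N e + diff_up G N e)
      - real e / real N * (1 - real e / real N) * G2 (real e / real N)
    = real e * (real N - real e) * (diff_down G N e + diff_up G N e - G2 (real e / real N) / real N ^ 2)"
    using N by (simp add: field_simps power2_eq_square)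
  also have "\<bar>\<dots>\<bar> \<le> real e * real N * (2 * M / real N ^ 3)"
    unfolding abs_mult[of "real e * (real N - real e)"] abs_of_nonneg[OF w(1)]
    using w one_le_bound e by (intro mult_mono diff_down_up_approx[OF e]) auto
  also have "\<dots> = 2 * M * real e / real N ^ 2"
    using N by (simp add: field_simps power2_eq_square power3_eq_cube)
  finally show ?thesis .
qed

lemma occupied_diff_down_approx:
  assumes "e \<le> N"
  shows "\<bar>real e * diff_down G N e + real e / real N * G1 (real e / real N)\<bar> \<le> M * real e / real N ^ 2"
proof (cases "e = 0")
  case False
  then have "1 \<le> e" by simp
  have "real e * diff_down G N e + real e / real N * G1 (real e / real N)
      = real e * (diff_down G N e + G1 (real e / real N) / real N)" by (simp add: field_simps)
  also have "\<bar>\<dots>\<bar> \<le> real e * (M / real N ^ 2)"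
    unfolding abs_mult abs_of_nat using diff_down_approx[OF \<open>1 \<le> e\<close> assms] by (intro mult_left_mono) auto
  finally show ?thesis by (simp add: mult.commute)
qed simp

lemma vacant_diff_up_approx:
  assumes "e \<le> N"
  shows "\<bar>(real N - real e) * diff_up G N e - (1 - real e / real N) * G1 (real e / real N)\<bar> \<le> M / real N"
proof (cases "e = N")
  case True
  then show ?thesis using N one_le_bound by simp
next
  case False
  then have "e + 1 \<le> N" using assms by simp
  have w: "0 \<le> real N - real e" "real N - real e \<le> real N" using assms by auto
  have "(real N - real e) * diff_up G N e - (1 - real e / real N) * G1 (real e / real N)
      = (real N - real e) * (diff_up G N e - G1 (real e / real N) / real N)"
    using N by (simp add: field_simps)
  also have "\<bar>\<dots>\<bar> \<le> real N * (M / real N ^ 2)"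
    unfolding abs_mult abs_of_nonneg[OF w(1)]
    using w one_le_bound by (intro mult_mono diff_up_approx[OF \<open>e + 1 \<le> N\<close>]) auto
  also have "\<dots> = M / real N" using N by (simp add: power2_eq_square)
  finally show ?thesis .
qed

lemma diff_down_up_first_order:
  assumes "1 \<le> e" "e \<le> N" "e' + 1 \<le> N"
  shows "\<bar>diff_down G N e + diff_up G N e' - (G1 (real e' / real N) - G1 (real e / real N)) / real N\<bar>
    \<le> 2 * M / real N ^ 2"
  using diff_down_approx[OF assms(1,2)] diff_up_approx[OF assms(3)]
  by (simp add: diff_divide_distrib abs_le_iff)

lemma abs_diff_down_up_le:
  assumes "1 \<le> e" "e \<le> N" "e' + 1 \<le> N"
  shows "\<bar>diff_down G N e + diff_up G N e'\<bar> \<le> 4 * M / real N"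
  using abs_diff_down_le[OF assms(1,2)] abs_diff_up_le[OF assms(3)] by linarith

lemma abs_deriv_diff_le:
  assumes "e \<le> N" "e' \<le> N"
  shows "\<bar>(G1 (real e' / real N) - G1 (real e / real N)) / real N\<bar> \<le> 2 * M / real N"
proof -
  have "\<bar>G1 (real e' / real N)\<bar> \<le> M" "\<bar>G1 (real e / real N)\<bar> \<le> M"
    using assms N by (auto intro!: bound1 divide_of_nat_in_unit_interval)
  then show ?thesis using N by (simp add: abs_divide divide_right_mono)
qed

end

lemma one_minus_mult_deriv_approx:
  assumes "z \<in> {0..1}"
  shows "\<bar>(1 - z) * G1 z - G1 0\<bar> \<le> 2 * M * z"
proof -
  have "\<bar>G1 z - G1 0\<bar> \<le> M * \<bar>z - 0\<bar>"
    using assms by (intro Icc_deriv_bound_lipschitz[OF deriv1 bound2]) auto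
  moreover have "\<bar>z * G1 z\<bar> \<le> z * M" using bound1[OF assms] assms by (simp add: abs_mult mult_left_mono)
  ultimately show ?thesis using assms by (auto simp: algebra_simps abs_if split: if_splits)
qed

end

lemma C3_profile_pair_approx:
  assumes a: "C3_profile Ga Ga1 Ga2 Ga3 M" and b: "C3_profile Gb Gb1 Gb2 Gb3 M"
    and N: "0 < N" and e: "1 \<le> e" "e \<le> N" "e' + 1 \<le> N"
  shows "\<bar>(diff_down Ga N e + diff_up Ga N e') * (diff_down Gb N e + diff_up Gb N e')
      - (Ga1 (real e' / real N) - Ga1 (real e / real N)) / real N
        * ((Gb1 (real e' / real N) - Gb1 (real e / real N)) / real N)\<bar> \<le> 12 * M^2 / real N ^ 3"
proof -
  define Da where "Da = diff_down Ga N e + diff_up Ga N e'"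
  define Db where "Db = diff_down Gb N e + diff_up Gb N e'"
  define Aa where "Aa = (Ga1 (real e' / real N) - Ga1 (real e / real N)) / real N"
  define Ab where "Ab = (Gb1 (real e' / real N) - Gb1 (real e / real N)) / real N"
  have bounds: "\<bar>Da - Aa\<bar> \<le> 2 * M / real N ^ 2" "\<bar>Db - Ab\<bar> \<le> 2 * M / real N ^ 2"
    "\<bar>Db\<bar> \<le> 4 * M / real N" "\<bar>Aa\<bar> \<le> 2 * M / real N"
    unfolding Da_def Db_def Aa_def Ab_def
    using C3_profile.diff_down_up_first_order[OF a N e] C3_profile.diff_down_up_first_order[OF b N e]
      C3_profile.abs_diff_down_up_le[OF b N e] C3_profile.abs_deriv_diff_le[OF a N e(2)] e
    by auto
  have "Da * Db - Aa * Ab = (Da - Aa) * Db + Aa * (Db - Ab)" by (simp add: algebra_simps)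
  then have "\<bar>Da * Db - Aa * Ab\<bar> \<le> \<bar>Da - Aa\<bar> * \<bar>Db\<bar> + \<bar>Aa\<bar> * \<bar>Db - Ab\<bar>"
    by (metis abs_mult abs_triangle_ineq)
  also have "\<dots> \<le> (2 * M / real N ^ 2) * (4 * M / real N) + (2 * M / real N) * (2 * M / real N ^ 2)"
    using bounds by (intro add_mono mult_mono) auto
  also have "\<dots> = 12 * M^2 / real N ^ 3" by (simp add: field_simps power2_eq_square power3_eq_cube)
  finally show ?thesis by (simp add: Da_def Db_def Aa_def Ab_def)
qed

lemma D01_eqI:
  assumes "(h has_real_derivative h1) (at z within {0..1})" "z \<in> {0..1}"
  shows "D01 h z = h1"
  using assms vector_derivative_within_cbox[of 0 1 z h h1]
  by (simp add: D01_def has_real_derivative_iff_has_vector_derivative)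

lemma continuous_on_unit_interval_bound:
  fixes f :: "real \<Rightarrow> real"
  assumes "continuous_on {0..1} f"
  obtains B where "B \<ge> 0" "\<And>x. x \<in> {0..1} \<Longrightarrow> \<bar>f x\<bar> \<le> B"
  using continuous_on_compact_bound[OF compact_Icc assms] by (metis norm_ge_zero order_trans real_norm_def)

lemma C3_01_weight_profile:
  assumes "C3_01 h"
  obtains G1 G2 G3 M where "C3_profile (\<lambda>v. v * h v) G1 G2 G3 M"
    "\<And>z. z \<in> {0..1} \<Longrightarrow> Bop h z = G1 z"
    "\<And>\<theta> z. z \<in> {0..1} \<Longrightarrow> z * Aop \<theta> h z = z * ((1 - z) * G2 z - \<theta> * G1 z + \<theta> * G1 0)"
proof -
  obtain h1 h2 h3 where
    d: "\<And>x. x \<in> {0..1} \<Longrightarrow> (h has_real_derivative h1 x) (at x within {0..1})"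
       "\<And>x. x \<in> {0..1} \<Longrightarrow> (h1 has_real_derivative h2 x) (at x within {0..1})"
       "\<And>x. x \<in> {0..1} \<Longrightarrow> (h2 has_real_derivative h3 x) (at x within {0..1})"
    and c3: "continuous_on {0..1} h3"
    using assms unfolding C3_01_def by blast
  have "continuous_on {0..1} h" "continuous_on {0..1} h1" "continuous_on {0..1} h2"
    using DERIV_continuous[OF d(1)] DERIV_continuous[OF d(2)] DERIV_continuous[OF d(3)]
    by (auto simp: continuous_on_eq_continuous_within)
  then obtain B0 B1 B2 B3 where B:
    "\<And>x. x \<in> {0..1} \<Longrightarrow> \<bar>h x\<bar> \<le> B0" "\<And>x. x \<in> {0..1} \<Longrightarrow> \<bar>h1 x\<bar> \<le> B1"
    "\<And>x. x \<in> {0..1} \<Longrightarrow> \<bar>h2 x\<bar> \<le> B2" "\<And>x. x \<in> {0..1} \<Longrightarrow> \<bar>h3 x\<bar> \<le> B3"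
    and B_nonneg: "B0 \<ge> 0" "B1 \<ge> 0" "B2 \<ge> 0" "B3 \<ge> 0"
    using c3 continuous_on_unit_interval_bound by metis
  define G1 where "G1 v = h v + v * h1 v" for v
  define G2 where "G2 v = 2 * h1 v + v * h2 v" for v
  define G3 where "G3 v = 3 * h2 v + v * h3 v" for v
  define M where "M = 1 + B0 + 2 * B1 + 3 * B2 + B3"
  have "C3_profile (\<lambda>v. v * h v) G1 G2 G3 M"
  proof
    fix x :: real assume x: "x \<in> {0..1}"
    show "((\<lambda>v. v * h v) has_real_derivative G1 x) (at x within {0..1})"
      unfolding G1_def using d(1)[OF x] by (auto intro!: derivative_eq_intros)
    show "(G1 has_real_derivative G2 x) (at x within {0..1})"
      unfolding G1_def[abs_def] G2_def using d(1,2)[OF x] by (auto intro!: derivative_eq_intros)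
    show "(G2 has_real_derivative G3 x) (at x within {0..1})"
      unfolding G2_def[abs_def] G3_def using d(2,3)[OF x] by (auto intro!: derivative_eq_intros)
    have x01: "0 \<le> x" "x \<le> 1" using x by auto
    have "\<bar>x * h x\<bar> \<le> x * B0" using B(1)[OF x] x01 by (simp add: abs_mult mult_left_mono)
    also have "\<dots> \<le> x * M" using x01 B_nonneg by (intro mult_left_mono) (auto simp: M_def)
    finally show "\<bar>x * h x\<bar> \<le> M * x" by (simp add: mult.commute)
    have "\<bar>x * h1 x\<bar> \<le> B1" "\<bar>x * h2 x\<bar> \<le> B2" "\<bar>x * h3 x\<bar> \<le> B3"
      using B(2-4)[OF x] x01 by (auto simp: abs_mult intro: mult_le_one[THEN order_trans] order_trans[OF mult_left_le_one_le])
    then show "\<bar>G1 x\<bar> \<le> M" "\<bar>G2 x\<bar> \<le> M" "\<bar>G3 x\<bar> \<le> M"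
      using B[OF x] B_nonneg by (auto simp: G1_def G2_def G3_def M_def)
  next
    show "1 \<le> M" using B_nonneg by (simp add: M_def)
  qed
  moreover have "Bop h z = G1 z" and "z * Aop \<theta> h z = z * ((1 - z) * G2 z - \<theta> * G1 z + \<theta> * G1 0)"
    if z: "z \<in> {0..1}" for z \<theta>
  proof -
    have e1: "D01 h z = h1 z" using D01_eqI d z by blast
    have "(D01 h has_real_derivative h2 z) (at z within {0..1})"
      by (rule has_field_derivative_transform_within[of h1 "h2 z" z "{0..1}" 1])
        (use z d in \<open>auto intro!: D01_eqI[symmetric]\<close>)
    then have e2: "D01 (D01 h) z = h2 z" using D01_eqI z by blast
    show "Bop h z = G1 z" "z * Aop \<theta> h z = z * ((1 - z) * G2 z - \<theta> * G1 z + \<theta> * G1 0)"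
      unfolding Bop_def Aop_def e1 e2 G1_def G2_def by (simp_all add: algebra_simps)
  qed
  ultimately show ?thesis using that by blast
qed

lemma C3_01_list_profiles:
  assumes hs: "\<forall>h\<in>set hs. C3_01 h"
  obtains G1 G2 G3 M where "\<And>k. k < length hs \<Longrightarrow> C3_profile (\<lambda>v. v * (hs ! k) v) (G1 k) (G2 k) (G3 k) M"
    and "1 \<le> M"
    and "\<And>k z. k < length hs \<Longrightarrow> z \<in> {0..1} \<Longrightarrow> Bop (hs ! k) z = G1 k z"
    and "\<And>k \<theta> z. k < length hs \<Longrightarrow> z \<in> {0..1} \<Longrightarrow>
      z * Aop \<theta> (hs ! k) z = z * ((1 - z) * G2 k z - \<theta> * G1 k z + \<theta> * G1 k 0)"
proof -
  define P where "P k q \<longleftrightarrow> C3_profile (\<lambda>v. v * (hs ! k) v) (fst q) (fst (snd q)) (fst (snd (snd q))) (snd (snd (snd q)))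
      \<and> (\<forall>z\<in>{0..1}. Bop (hs ! k) z = fst q z)
      \<and> (\<forall>\<theta>. \<forall>z\<in>{0..1}. z * Aop \<theta> (hs ! k) z = z * ((1 - z) * fst (snd q) z - \<theta> * fst q z + \<theta> * fst q 0))"
    for k and q :: "(real \<Rightarrow> real) \<times> (real \<Rightarrow> real) \<times> (real \<Rightarrow> real) \<times> real"
  have "\<exists>q. P k q" if "k < length hs" for k
  proof -
    have "C3_01 (hs ! k)" using hs that by simp
    then obtain G1 G2 G3 M where "C3_profile (\<lambda>v. v * (hs ! k) v) G1 G2 G3 M"
      "\<And>z. z \<in> {0..1} \<Longrightarrow> Bop (hs ! k) z = G1 z"
      "\<And>\<theta> z. z \<in> {0..1} \<Longrightarrow> z * Aop \<theta> (hs ! k) z = z * ((1 - z) * G2 z - \<theta> * G1 z + \<theta> * G1 0)"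
      by (rule C3_01_weight_profile) blast
    then have "P k (G1, G2, G3, M)" by (simp add: P_def)
    then show ?thesis ..
  qed
  then obtain q where q: "\<And>k. k < length hs \<Longrightarrow> P k (q k)" by metis
  define M where "M = 1 + (\<Sum>k<length hs. snd (snd (snd (q k))))"
  have profile: "C3_profile (\<lambda>v. v * (hs ! k) v) (fst (q k)) (fst (snd (q k))) (fst (snd (snd (q k)))) (snd (snd (snd (q k))))"
    if "k < length hs" for k using q[OF that] by (simp add: P_def)
  then have Mk: "1 \<le> snd (snd (snd (q k)))" if "k < length hs" for k
    using that by (simp add: C3_profile_def)
  have "snd (snd (snd (q k))) \<le> M" if "k < length hs" for k
    unfolding M_def using that Mk member_le_sum[of k "{..<length hs}" "\<lambda>k. snd (snd (snd (q k)))"] by force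
  moreover have "1 \<le> M"
    unfolding M_def using sum_nonneg[of "{..<length hs}" "\<lambda>k. snd (snd (snd (q k)))"] Mk by force
  ultimately show ?thesis
    using that[of "\<lambda>k. fst (q k)" "\<lambda>k. fst (snd (q k))" "\<lambda>k. fst (snd (snd (q k)))" M]
      C3_profile_mono[OF profile] q by (simp add: P_def)
qed

section \<open>Configurations and the jump sum\<close>

definition jump_sum :: "nat \<Rightarrow> real \<Rightarrow> (nat \<Rightarrow> nat) \<Rightarrow> (nat \<Rightarrow> nat \<Rightarrow> real) \<Rightarrow> real" where
  "jump_sum L d eta f = (\<Sum>x<L. \<Sum>y<L. if x \<noteq> y then real (eta x) * (d + real (eta y)) * f x y else 0)"

definition site_sum :: "nat \<Rightarrow> nat \<Rightarrow> (real \<Rightarrow> real) \<Rightarrow> (nat \<Rightarrow> nat) \<Rightarrow> real" where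
  "site_sum L N G \<xi> = (\<Sum>z<L. G (real (\<xi> z) / real N))"

lemma jump_sum_zero [simp]: "jump_sum L d eta (\<lambda>_ _. 0) = 0"
  unfolding jump_sum_def by (intro sum.neutral ballI) simp

lemma gen_eq_jump_sum: "gen L d F eta = jump_sum L d eta (\<lambda>x y. F (jump eta x y) - F eta)"
  by (simp add: gen_def jump_sum_def)

lemma emp_eq_site_sum: "emp L N \<xi> h = site_sum L N (\<lambda>v. v * h v) \<xi>"
  by (simp add: emp_def site_sum_def)

lemma Omega_nonempty: "0 < L \<Longrightarrow> Omega L N \<noteq> {}"
proof -
  assume "0 < L"
  then have "(\<lambda>x. if x = 0 then N else 0) \<in> Omega L N" by (auto simp: Omega_def)
  then show ?thesis by blast
qed

context
  fixes L N :: nat and eta :: "nat \<Rightarrow> nat"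
  assumes eta: "eta \<in> Omega L N" and N: "0 < N"
begin

lemma Omega_sum: "(\<Sum>x<L. real (eta x)) = real N"
  using eta by (simp add: Omega_def flip: of_nat_sum)

lemma Omega_density_sum: "(\<Sum>x<L. real (eta x) / real N) = 1"
  using Omega_sum N by (simp flip: sum_divide_distrib)

lemma Omega_pos_sites: "0 < L"
  using eta N unfolding Omega_def by (cases "L = 0") auto

lemma Omega_pair_le: "x < L \<Longrightarrow> y < L \<Longrightarrow> x \<noteq> y \<Longrightarrow> eta x + eta y \<le> N"
  using sum_mono2[of "{..<L}" "{x, y}" eta] eta by (simp add: Omega_def)

lemma Omega_le: "x < L \<Longrightarrow> eta x \<le> N"
  using member_le_sum[of x "{..<L}" eta] eta by (simp add: Omega_def)

lemma Omega_density_in_unit_interval: "x < L \<Longrightarrow> real (eta x) / real N \<in> {0..1}"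
  using Omega_le N by (auto intro: divide_of_nat_in_unit_interval)

lemma abs_emp_le:
  assumes "\<And>z. z \<in> {0..1} \<Longrightarrow> \<bar>g z\<bar> \<le> B"
  shows "\<bar>emp L N eta g\<bar> \<le> B"
proof -
  have "\<bar>emp L N eta g\<bar> \<le> (\<Sum>x<L. real (eta x) / real N * B)"
    unfolding emp_def
  proof (intro order_trans[OF sum_abs] sum_mono)
    fix x assume "x \<in> {..<L}"
    then show "\<bar>real (eta x) / real N * g (real (eta x) / real N)\<bar> \<le> real (eta x) / real N * B"
      using assms[OF Omega_density_in_unit_interval] by (auto simp: abs_mult intro!: divide_right_mono mult_left_mono)
  qed
  also have "\<dots> = B" by (simp only: sum_distrib_right[symmetric] Omega_density_sum mult_1)
  finally show ?thesis .
qed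

lemma abs_site_sum_le:
  assumes "\<And>z. z \<in> {0..1} \<Longrightarrow> \<bar>G z\<bar> \<le> B * z"
  shows "\<bar>site_sum L N G eta\<bar> \<le> B"
proof -
  have "\<bar>site_sum L N G eta\<bar> \<le> (\<Sum>x<L. B * (real (eta x) / real N))"
    unfolding site_sum_def
    using assms[OF Omega_density_in_unit_interval] by (intro order_trans[OF sum_abs] sum_mono) simp
  also have "\<dots> = B" by (simp only: sum_distrib_left[symmetric] Omega_density_sum)
  finally show ?thesis .
qed

end

definition error_rate :: "real \<Rightarrow> nat \<Rightarrow> nat \<Rightarrow> real \<Rightarrow> real" where
  "error_rate \<theta> L N d = 1 / real N + \<bar>d * real L - \<theta>\<bar> + d + d * real L / real N"

lemma error_rate_nonneg: "0 \<le> d \<Longrightarrow> 0 \<le> error_rate \<theta> L N d"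
  by (simp add: error_rate_def)

lemma jump_sum_abs_diff_le:
  assumes "0 \<le> d"
    and "\<And>x y. x < L \<Longrightarrow> y < L \<Longrightarrow> x \<noteq> y \<Longrightarrow> 1 \<le> eta x \<Longrightarrow> \<bar>f x y - g x y\<bar> \<le> c x y"
  shows "\<bar>jump_sum L d eta f - jump_sum L d eta g\<bar> \<le> jump_sum L d eta c"
  unfolding jump_sum_def
proof (intro abs_sum_diff_le)
  fix x y assume "x \<in> {..<L}" "y \<in> {..<L}"
  then show "\<bar>(if x \<noteq> y then real (eta x) * (d + real (eta y)) * f x y else 0) -
      (if x \<noteq> y then real (eta x) * (d + real (eta y)) * g x y else 0)\<bar>
    \<le> (if x \<noteq> y then real (eta x) * (d + real (eta y)) * c x y else 0)"
    using assms(1) assms(2)[of x y]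
    by (cases "eta x = 0") (auto simp: abs_mult right_diff_distrib[symmetric] intro!: mult_left_mono)
qed

context
  fixes L N :: nat and eta :: "nat \<Rightarrow> nat"
  assumes eta: "eta \<in> Omega L N" and N: "0 < N"
begin

lemma jump_sum_const_le:
  assumes "0 \<le> d" "0 \<le> B"
  shows "jump_sum L d eta (\<lambda>_ _. B) \<le> real N * (d * real L + real N) * B"
proof -
  have "jump_sum L d eta (\<lambda>_ _. B) = (\<Sum>x<L. \<Sum>y<L. if x \<noteq> y then real (eta x) * (d + real (eta y)) else 0) * B"
    unfolding jump_sum_def sum_distrib_right by (intro sum.cong refl) simp
  also have "\<dots> = ((\<Sum>x<L. real (eta x)) * (\<Sum>y<L. d + real (eta y))
      - (\<Sum>x<L. real (eta x) * (d + real (eta x)))) * B"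
    unfolding sum_off_diagonal_product[OF finite_lessThan] ..
  also have "\<dots> \<le> (\<Sum>x<L. real (eta x)) * (\<Sum>y<L. d + real (eta y)) * B"
    using assms by (intro mult_right_mono) (auto intro: sum_nonneg)
  also have "\<dots> = real N * (d * real L + real N) * B"
    using eta N by (simp add: Omega_sum sum.distrib)
  finally show ?thesis .
qed

lemma jump_sum_separable:
  "jump_sum L d eta (\<lambda>x y. a x + b y) =
     (\<Sum>x<L. real (eta x) * (real N - real (eta x)) * (a x + b x))
     + d * (real L - 1) * (\<Sum>x<L. real (eta x) * a x) + d * (\<Sum>x<L. (real N - real (eta x)) * b x)"
proof -
  define e where "e x = real (eta x)" for x
  have sum_e: "(\<Sum>x<L. e x) = real N" using Omega_sum[OF eta N] by (simp add: e_def)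
  note off_diag = sum_off_diagonal_product[OF finite_lessThan]
  have "jump_sum L d eta (\<lambda>x y. a x + b y) =
      (\<Sum>x<L. \<Sum>y<L. if x \<noteq> y then (e x * a x) * e y else 0) +
      (\<Sum>x<L. \<Sum>y<L. if x \<noteq> y then e x * (e y * b y) else 0) +
      (\<Sum>x<L. \<Sum>y<L. if x \<noteq> y then (e x * a x) * d else 0) +
      (\<Sum>x<L. \<Sum>y<L. if x \<noteq> y then e x * (d * b y) else 0)"
    unfolding jump_sum_def e_def
    by (simp only: sum.distrib[symmetric]) (intro sum.cong refl, simp add: algebra_simps)
  also have "\<dots> = (\<Sum>x<L. e x * (real N - e x) * a x) + (\<Sum>x<L. e x * (real N - e x) * b x)
      + d * (real L - 1) * (\<Sum>x<L. e x * a x) + d * (\<Sum>x<L. (real N - e x) * b x)"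
  proof -
    have "(\<Sum>x<L. e x * a x) * (\<Sum>x<L. e x) - (\<Sum>x<L. e x * a x * e x) = (\<Sum>x<L. e x * (real N - e x) * a x)"
      unfolding sum_e by (simp add: sum_distrib_left sum_distrib_right right_diff_distrib left_diff_distrib sum_subtractf mult_ac)
    moreover have "(\<Sum>x<L. e x) * (\<Sum>x<L. e x * b x) - (\<Sum>x<L. e x * (e x * b x)) = (\<Sum>x<L. e x * (real N - e x) * b x)"
      unfolding sum_e by (simp add: sum_distrib_left sum_distrib_right right_diff_distrib left_diff_distrib sum_subtractf mult_ac)
    moreover have "(\<Sum>x<L. e x * a x) * (\<Sum>x<L. d) - (\<Sum>x<L. e x * a x * d) = d * (real L - 1) * (\<Sum>x<L. e x * a x)"
      by (simp add: sum_distrib_left sum_distrib_right right_diff_distrib left_diff_distrib sum_subtractf mult_ac)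
    moreover have "(\<Sum>x<L. e x) * (\<Sum>x<L. d * b x) - (\<Sum>x<L. e x * (d * b x)) = d * (\<Sum>x<L. (real N - e x) * b x)"
      unfolding sum_e by (simp add: sum_distrib_left sum_distrib_right right_diff_distrib left_diff_distrib sum_subtractf mult_ac)
    ultimately show ?thesis unfolding off_diag by simp
  qed
  finally show ?thesis by (simp add: e_def sum.distrib[symmetric] algebra_simps)
qed
end

lemma jump_sum_cong:
  assumes "\<And>x y. x < L \<Longrightarrow> y < L \<Longrightarrow> x \<noteq> y \<Longrightarrow> 1 \<le> eta x \<Longrightarrow> f x y = g x y"
  shows "jump_sum L d eta f = jump_sum L d eta g"
  unfolding jump_sum_def
proof (intro sum.cong refl)
  fix x y assume "x \<in> {..<L}" "y \<in> {..<L}"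
  then show "(if x \<noteq> y then real (eta x) * (d + real (eta y)) * f x y else 0) =
      (if x \<noteq> y then real (eta x) * (d + real (eta y)) * g x y else 0)"
    using assms[of x y] by (cases "eta x = 0") auto
qed

lemma jump_sum_sum: "jump_sum L d eta (\<lambda>x y. \<Sum>s\<in>S. f s x y) = (\<Sum>s\<in>S. jump_sum L d eta (f s))"
proof -
  have "jump_sum L d eta (\<lambda>x y. \<Sum>s\<in>S. f s x y) =
      (\<Sum>x<L. \<Sum>y<L. \<Sum>s\<in>S. if x \<noteq> y then real (eta x) * (d + real (eta y)) * f s x y else 0)"
    unfolding jump_sum_def by (intro sum.cong refl) (simp add: sum_distrib_left)
  also have "\<dots> = (\<Sum>x<L. \<Sum>s\<in>S. \<Sum>y<L. if x \<noteq> y then real (eta x) * (d + real (eta y)) * f s x y else 0)"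
    by (intro sum.cong refl) (rule sum.swap)
  also have "\<dots> = (\<Sum>s\<in>S. jump_sum L d eta (f s))"
    unfolding jump_sum_def by (rule sum.swap)
  finally show ?thesis .
qed

lemma jump_sum_mult_right: "jump_sum L d eta (\<lambda>x y. f x y * c) = jump_sum L d eta f * c"
  unfolding jump_sum_def sum_distrib_right by (intro sum.cong refl) simp

lemma site_sum_jump:
  assumes "x < L" "y < L" "x \<noteq> y" "1 \<le> eta x"
  shows "site_sum L N G (jump eta x y) = site_sum L N G eta + jump_incr G N eta x y"
proof -
  have "(\<Sum>z<L. G (real (jump eta x y z) / real N) - G (real (eta z) / real N))
      = (\<Sum>z\<in>{x, y}. G (real (jump eta x y z) / real N) - G (real (eta z) / real N))"
    by (rule sum.mono_neutral_right) (use assms in \<open>auto simp: jump_def\<close>)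
  also have "\<dots> = jump_incr G N eta x y"
    using assms by (simp add: jump_def jump_incr_def diff_down_def diff_up_def of_nat_diff add.commute)
  finally show ?thesis by (simp add: site_sum_def sum_subtractf algebra_simps)
qed

lemma gen_prod_site_sum:
  fixes n :: nat
  shows "gen L d (\<lambda>\<xi>. \<Prod>k<n. site_sum L N (G k) \<xi>) eta =
    (\<Sum>S\<in>Pow {..<n} - {{}}. jump_sum L d eta
       (\<lambda>x y. (\<Prod>k\<in>S. jump_incr (G k) N eta x y) * (\<Prod>k\<in>{..<n} - S. site_sum L N (G k) eta)))"
proof -
  have "gen L d (\<lambda>\<xi>. \<Prod>k<n. site_sum L N (G k) \<xi>) eta = jump_sum L d eta (\<lambda>x y.
      \<Sum>S\<in>Pow {..<n} - {{}}. (\<Prod>k\<in>S. jump_incr (G k) N eta x y) * (\<Prod>k\<in>{..<n} - S. site_sum L N (G k) eta))"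
    unfolding gen_eq_jump_sum
  proof (intro jump_sum_cong)
    fix x y assume "x < L" "y < L" "x \<noteq> y" "1 \<le> eta x"
    then show "(\<Prod>k<n. site_sum L N (G k) (jump eta x y)) - (\<Prod>k<n. site_sum L N (G k) eta) =
        (\<Sum>S\<in>Pow {..<n} - {{}}. (\<Prod>k\<in>S. jump_incr (G k) N eta x y) * (\<Prod>k\<in>{..<n} - S. site_sum L N (G k) eta))"
      using prod_add_diff_prod[where A="{..<n}" and F="\<lambda>k. site_sum L N (G k) eta" and D="\<lambda>k. jump_incr (G k) N eta x y"]
      by (simp add: site_sum_jump)
  qed
  then show ?thesis by (simp only: jump_sum_sum)
qed

context
  fixes L N :: nat and eta :: "nat \<Rightarrow> nat"
  assumes eta: "eta \<in> Omega L N" and N: "0 < N"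
begin

lemma emp_weighted_cong:
  assumes "\<And>z. z \<in> {0..1} \<Longrightarrow> z * f z = z * g z"
  shows "emp L N eta f = emp L N eta g"
  unfolding emp_def using assms[OF Omega_density_in_unit_interval[OF eta N]] by (intro sum.cong) auto

lemma emp_add_const: "emp L N eta (\<lambda>z. f z + c) = emp L N eta f + c"
proof -
  have "emp L N eta (\<lambda>z. f z + c) = emp L N eta f + c * (\<Sum>x<L. real (eta x) / real N)"
    by (simp add: emp_def sum_distrib_left sum.distrib algebra_simps)
  then show ?thesis using Omega_density_sum[OF eta N] by simp
qed

end

section \<open>The first-order part of the generator\<close>

context C3_profile
begin

context
  fixes L N :: nat and eta :: "nat \<Rightarrow> nat"
  assumes eta: "eta \<in> Omega L N" and N: "0 < N"
begin

lemma sum_occupied_diff_down_up_approx: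
  "\<bar>(\<Sum>x<L. real (eta x) * (real N - real (eta x)) * (diff_down G N (eta x) + diff_up G N (eta x)))
    - (\<Sum>x<L. real (eta x) / real N * (1 - real (eta x) / real N) * G2 (real (eta x) / real N))\<bar>
   \<le> 2 * M / real N"
proof -
  have "\<bar>(\<Sum>x<L. real (eta x) * (real N - real (eta x)) * (diff_down G N (eta x) + diff_up G N (eta x)))
    - (\<Sum>x<L. real (eta x) / real N * (1 - real (eta x) / real N) * G2 (real (eta x) / real N))\<bar>
     \<le> (\<Sum>x<L. 2 * M * real (eta x) / real N ^ 2)"
    using occupied_diff_down_up_approx[OF N Omega_le[OF eta N]] by (intro abs_sum_diff_le) simp
  also have "\<dots> = 2 * M / real N" using Omega_sum[OF eta N] N
    by (simp add: sum_divide_distrib[symmetric] sum_distrib_left[symmetric] power2_eq_square)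
  finally show ?thesis .
qed

lemma sum_occupied_diff_down_approx:
  "\<bar>(\<Sum>x<L. real (eta x) * diff_down G N (eta x)) + emp L N eta G1\<bar> \<le> M / real N"
proof -
  have "\<bar>(\<Sum>x<L. real (eta x) * diff_down G N (eta x))
      - (\<Sum>x<L. - (real (eta x) / real N * G1 (real (eta x) / real N)))\<bar>
     \<le> (\<Sum>x<L. M * real (eta x) / real N ^ 2)"
    using occupied_diff_down_approx[OF N Omega_le[OF eta N]] by (intro abs_sum_diff_le) simp
  also have "\<dots> = M / real N" using Omega_sum[OF eta N] N
    by (simp add: sum_divide_distrib[symmetric] sum_distrib_left[symmetric] power2_eq_square)
  finally show ?thesis by (simp add: emp_def sum_negf)
qed

lemma sum_vacant_diff_up_approx:
  "\<bar>(\<Sum>x<L. (real N - real (eta x)) * diff_up G N (eta x))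
    - (\<Sum>x<L. (1 - real (eta x) / real N) * G1 (real (eta x) / real N))\<bar> \<le> real L * M / real N"
proof -
  have "\<bar>(\<Sum>x<L. (real N - real (eta x)) * diff_up G N (eta x))
    - (\<Sum>x<L. (1 - real (eta x) / real N) * G1 (real (eta x) / real N))\<bar> \<le> (\<Sum>x<L. M / real N)"
    using vacant_diff_up_approx[OF N Omega_le[OF eta N]] by (intro abs_sum_diff_le) simp
  then show ?thesis by simp
qed

lemma sum_one_minus_mult_deriv_approx:
  "\<bar>(\<Sum>x<L. (1 - real (eta x) / real N) * G1 (real (eta x) / real N)) - real L * G1 0\<bar> \<le> 2 * M"
proof -
  have "\<bar>(\<Sum>x<L. (1 - real (eta x) / real N) * G1 (real (eta x) / real N)) - (\<Sum>x<L. G1 0)\<bar>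
      \<le> (\<Sum>x<L. 2 * M * (real (eta x) / real N))"
    using one_minus_mult_deriv_approx[OF Omega_density_in_unit_interval[OF eta N]]
    by (intro abs_sum_diff_le) simp
  also have "\<dots> = 2 * M"
    by (simp only: sum_distrib_left[symmetric] Omega_density_sum[OF eta N] mult_1_right)
  finally show ?thesis by simp
qed

text \<open>Summing the jump increments against the rates leaves \<open>\<Sum>\<^sub>x \<eta>\<^sub>x (N - \<eta>\<^sub>x) \<Delta>\<^sup>2G\<close>, which is the
  diffusion part, plus \<open>d (L - 1)\<close> and \<open>d\<close> times first-order sums; since \<open>d L \<approx> \<theta>\<close> these
  produce the immigration term \<open>\<theta> (G'(0) - \<mu>\<^sup>(\<^sup>\<eta>\<^sup>)(G'))\<close>.\<close>

lemma jump_sum_diff_approx_drift: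
  assumes d: "0 \<le> d"
  shows "\<bar>jump_sum L d eta (jump_incr G N eta)
      - (emp L N eta (\<lambda>z. (1 - z) * G2 z - \<theta> * G1 z) + \<theta> * G1 0)\<bar> \<le> 3 * M * error_rate \<theta> L N d"
proof -
  define P where "P = (\<Sum>x<L. real (eta x) * (real N - real (eta x)) * (diff_down G N (eta x) + diff_up G N (eta x)))"
  define Q where "Q = (\<Sum>x<L. real (eta x) / real N * (1 - real (eta x) / real N) * G2 (real (eta x) / real N))"
  define X where "X = (\<Sum>x<L. real (eta x) * diff_down G N (eta x))"
  define Y where "Y = (\<Sum>x<L. (real N - real (eta x)) * diff_up G N (eta x))"
  define Z where "Z = (\<Sum>x<L. (1 - real (eta x) / real N) * G1 (real (eta x) / real N))"
  define S where "S = emp L N eta G1"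
  have split: "jump_sum L d eta (jump_incr G N eta) = P + d * (real L - 1) * X + d * Y"
    using jump_sum_separable[OF eta N] by (simp add: jump_incr_def[abs_def] P_def X_def Y_def)
  have target: "emp L N eta (\<lambda>z. (1 - z) * G2 z - \<theta> * G1 z) + \<theta> * G1 0 = Q - \<theta> * S + \<theta> * G1 0"
    by (simp add: emp_def Q_def S_def sum_subtractf sum_distrib_left sum.distrib algebra_simps)
  have dL: "0 \<le> d * (real L - 1)" "d * (real L - 1) \<le> d * real L"
    using Omega_pos_sites[OF eta N] d by (simp, simp add: right_diff_distrib)
  have "P + d * (real L - 1) * X + d * Y - (Q - \<theta> * S + \<theta> * G1 0) =
      (P - Q) + d * (real L - 1) * (X + S) - (d * (real L - 1) - \<theta>) * S
      + d * (Y - Z) + d * (Z - real L * G1 0) + (d * real L - \<theta>) * G1 0"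
    by (simp add: algebra_simps)
  moreover have "\<bar>d * (real L - 1) * (X + S)\<bar> \<le> d * real L * (M / real N)"
    unfolding abs_mult[of "d * (real L - 1)"] abs_of_nonneg[OF dL(1)]
    using dL d sum_occupied_diff_down_approx Omega_pos_sites[OF eta N]
    by (intro mult_mono) (auto simp: X_def S_def)
  moreover have "\<bar>(d * (real L - 1) - \<theta>) * S\<bar> \<le> (\<bar>d * real L - \<theta>\<bar> + d) * M"
    unfolding abs_mult S_def using abs_emp_le[OF eta N bound1] d by (intro mult_mono) (auto simp: algebra_simps)
  moreover have "\<bar>d * (Y - Z)\<bar> \<le> d * (real L * M / real N)"
    unfolding abs_mult abs_of_nonneg[OF d] using sum_vacant_diff_up_approx d
    by (intro mult_left_mono) (auto simp: Y_def Z_def)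
  moreover have "\<bar>d * (Z - real L * G1 0)\<bar> \<le> d * (2 * M)"
    unfolding abs_mult abs_of_nonneg[OF d] using sum_one_minus_mult_deriv_approx d
    by (intro mult_left_mono) (auto simp: Z_def)
  moreover have "\<bar>(d * real L - \<theta>) * G1 0\<bar> \<le> \<bar>d * real L - \<theta>\<bar> * M"
    unfolding abs_mult by (intro mult_left_mono) (auto simp: bound1)
  ultimately have "\<bar>P + d * (real L - 1) * X + d * Y - (Q - \<theta> * S + \<theta> * G1 0)\<bar>
      \<le> 2 * M / real N + d * real L * (M / real N) + (\<bar>d * real L - \<theta>\<bar> + d) * M
        + d * (real L * M / real N) + d * (2 * M) + \<bar>d * real L - \<theta>\<bar> * M"
    using sum_occupied_diff_down_up_approx unfolding P_def[symmetric] Q_def[symmetric] by (smt (verit))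
  also have "\<dots> = M * (2 / real N + 2 * \<bar>d * real L - \<theta>\<bar> + 3 * d + 2 * (d * real L / real N))"
    by (simp add: algebra_simps)
  also have "\<dots> \<le> M * (3 * error_rate \<theta> L N d)"
    using one_le_bound d by (intro mult_left_mono) (auto simp: error_rate_def divide_inverse)
  finally show ?thesis unfolding split target by (simp add: mult_ac)
qed

end

end

section \<open>The second-order part of the generator\<close>

lemma jump_sum_deriv_diff_product:
  fixes ga gb :: "real \<Rightarrow> real"
  assumes ga: "\<And>z. z \<in> {0..1} \<Longrightarrow> \<bar>ga z\<bar> \<le> M" and gb: "\<And>z. z \<in> {0..1} \<Longrightarrow> \<bar>gb z\<bar> \<le> M"
    and eta: "eta \<in> Omega L N" and N: "0 < N" and d: "0 \<le> d"
  shows "\<bar>jump_sum L d eta (\<lambda>x y. (ga (real (eta y) / real N) - ga (real (eta x) / real N)) / real N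
        * ((gb (real (eta y) / real N) - gb (real (eta x) / real N)) / real N))
      - 2 * (emp L N eta (\<lambda>z. ga z * gb z) - emp L N eta ga * emp L N eta gb)\<bar>
    \<le> 4 * M^2 * (d * real L / real N)"
proof -
  define u where "u x = real (eta x) / real N" for x
  define A where "A g x y = (g (u y) - g (u x)) / real N" for g :: "real \<Rightarrow> real" and x y
  have Nr: "0 < real N" using N by simp
  have u01: "x < L \<Longrightarrow> u x \<in> {0..1}" for x using Omega_density_in_unit_interval[OF eta N] by (simp add: u_def)
  have "jump_sum L d eta (\<lambda>x y. A ga x y * A gb x y)
      = (\<Sum>x<L. \<Sum>y<L. u x * u y * ((ga (u y) - ga (u x)) * (gb (u y) - gb (u x))))
        + d * (\<Sum>x<L. \<Sum>y<L. if x \<noteq> y then real (eta x) * (A ga x y * A gb x y) else 0)"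
    unfolding jump_sum_def sum_distrib_left sum.distrib[symmetric]
    using Nr by (intro sum.cong refl) (auto simp: A_def u_def field_simps power2_eq_square)
  also have "(\<Sum>x<L. \<Sum>y<L. u x * u y * ((ga (u y) - ga (u x)) * (gb (u y) - gb (u x))))
      = 2 * (emp L N eta (\<lambda>z. ga z * gb z) - emp L N eta ga * emp L N eta gb)"
    using double_sum_product_of_differences[of u "{..<L}"] Omega_density_sum[OF eta N]
    by (simp add: emp_def u_def)
  finally have split: "jump_sum L d eta (\<lambda>x y. A ga x y * A gb x y)
      - 2 * (emp L N eta (\<lambda>z. ga z * gb z) - emp L N eta ga * emp L N eta gb)
      = d * (\<Sum>x<L. \<Sum>y<L. if x \<noteq> y then real (eta x) * (A ga x y * A gb x y) else 0)" by simp
  have "\<bar>(\<Sum>x<L. \<Sum>y<L. if x \<noteq> y then real (eta x) * (A ga x y * A gb x y) else 0) - (\<Sum>x<L. \<Sum>y<L. 0)\<bar>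
      \<le> (\<Sum>x<L. \<Sum>y<L. real (eta x) * (4 * M^2 / real N ^ 2))"
  proof (intro abs_sum_diff_le order_trans[OF _ abs_sum_diff_le])
    fix x y assume "x \<in> {..<L}" "y \<in> {..<L}"
    then have "\<bar>ga (u y) - ga (u x)\<bar> \<le> 2 * M" "\<bar>gb (u y) - gb (u x)\<bar> \<le> 2 * M"
      using ga[OF u01[of x]] ga[OF u01[of y]] gb[OF u01[of x]] gb[OF u01[of y]] by auto
    then have "\<bar>A ga x y\<bar> \<le> 2 * M / real N" "\<bar>A gb x y\<bar> \<le> 2 * M / real N"
      using Nr by (auto simp: A_def abs_divide intro: divide_right_mono)
    then have "\<bar>A ga x y * A gb x y\<bar> \<le> (2 * M / real N) * (2 * M / real N)"
      unfolding abs_mult by (intro mult_mono) auto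
    also have "\<dots> = 4 * M^2 / real N ^ 2" by (simp add: power2_eq_square)
    finally have "real (eta x) * \<bar>A ga x y * A gb x y\<bar> \<le> real (eta x) * (4 * M^2 / real N ^ 2)"
      by (rule mult_left_mono) simp
    then show "\<bar>(if x \<noteq> y then real (eta x) * (A ga x y * A gb x y) else 0) - 0\<bar>
        \<le> real (eta x) * (4 * M^2 / real N ^ 2)"
      by (simp add: abs_mult)
  qed
  also have "\<dots> = (\<Sum>x<L. real (eta x)) * (real L * (4 * M^2 / real N ^ 2))"
    by (simp add: sum_distrib_left sum_distrib_right sum_divide_distrib mult_ac)
  also have "\<dots> = 4 * M^2 * real L / real N"
    using Omega_sum[OF eta N] Nr by (simp add: power2_eq_square)
  finally have "\<bar>d * (\<Sum>x<L. \<Sum>y<L. if x \<noteq> y then real (eta x) * (A ga x y * A gb x y) else 0)\<bar>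
      \<le> d * (4 * M^2 * real L / real N)"
    unfolding abs_mult abs_of_nonneg[OF d] using d by (intro mult_left_mono) simp_all
  then have "\<bar>jump_sum L d eta (\<lambda>x y. A ga x y * A gb x y)
      - 2 * (emp L N eta (\<lambda>z. ga z * gb z) - emp L N eta ga * emp L N eta gb)\<bar> \<le> 4 * M^2 * (d * real L / real N)"
    unfolding split by (simp add: mult_ac)
  then show ?thesis unfolding A_def u_def .
qed

text \<open>The jump increments are, to order \<open>N\<^sup>-\<^sup>2\<close>, differences \<open>(G'(\<eta>\<^sub>y/N) - G'(\<eta>\<^sub>x/N))/N\<close>; the
  double sum of their products with weights \<open>\<eta>\<^sub>x \<eta>\<^sub>y\<close> is twice a covariance under \<open>\<mu>\<^sup>(\<^sup>\<eta>\<^sup>)\<close>.\<close>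

lemma jump_sum_product_approx_covariance:
  assumes a: "C3_profile Ga Ga1 Ga2 Ga3 M" and b: "C3_profile Gb Gb1 Gb2 Gb3 M"
    and eta: "eta \<in> Omega L N" and N: "0 < N" and d: "0 \<le> d"
  shows "\<bar>jump_sum L d eta (\<lambda>x y. jump_incr Ga N eta x y * jump_incr Gb N eta x y)
      - 2 * (emp L N eta (\<lambda>z. Ga1 z * Gb1 z) - emp L N eta Ga1 * emp L N eta Gb1)\<bar>
    \<le> 16 * M^2 * error_rate \<theta> L N d"
proof -
  define A where "A g x y = (g (real (eta y) / real N) - g (real (eta x) / real N)) / real N"
    for g :: "real \<Rightarrow> real" and x y
  have Nr: "0 < real N" using N by simp
  have "\<bar>jump_sum L d eta (\<lambda>x y. jump_incr Ga N eta x y * jump_incr Gb N eta x y)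
      - jump_sum L d eta (\<lambda>x y. A Ga1 x y * A Gb1 x y)\<bar> \<le> jump_sum L d eta (\<lambda>_ _. 12 * M^2 / real N ^ 3)"
  proof (rule jump_sum_abs_diff_le[OF d])
    fix x y assume "x < L" "y < L" "x \<noteq> y" "1 \<le> eta x"
    then have "1 \<le> eta x" "eta x \<le> N" "eta y + 1 \<le> N"
      using Omega_pair_le[OF eta N] Omega_le[OF eta N] by force+
    from C3_profile_pair_approx[OF a b N this]
    show "\<bar>jump_incr Ga N eta x y * jump_incr Gb N eta x y - A Ga1 x y * A Gb1 x y\<bar> \<le> 12 * M^2 / real N ^ 3"
      by (simp add: jump_incr_def A_def)
  qed
  also have "\<dots> \<le> real N * (d * real L + real N) * (12 * M^2 / real N ^ 3)"
    by (rule jump_sum_const_le[OF eta N d]) simp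
  also have "\<dots> = 12 * M^2 * (d * real L / real N ^ 2 + 1 / real N)"
    using Nr by (simp add: field_simps power2_eq_square power3_eq_cube)
  finally have "\<bar>jump_sum L d eta (\<lambda>x y. jump_incr Ga N eta x y * jump_incr Gb N eta x y)
      - 2 * (emp L N eta (\<lambda>z. Ga1 z * Gb1 z) - emp L N eta Ga1 * emp L N eta Gb1)\<bar>
    \<le> 12 * M^2 * (d * real L / real N ^ 2 + 1 / real N) + 4 * M^2 * (d * real L / real N)"
    using jump_sum_deriv_diff_product[where ga=Ga1 and gb=Gb1, OF C3_profile.bound1[OF a] C3_profile.bound1[OF b] eta N d]
    unfolding A_def by linarith
  also have "\<dots> \<le> 12 * M^2 * error_rate \<theta> L N d + 4 * M^2 * error_rate \<theta> L N d"
  proof (intro add_mono mult_left_mono)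
    have "d * real L / real N ^ 2 \<le> d * real L / real N"
      using d Nr by (intro divide_left_mono) (auto simp: power2_eq_square)
    then show "d * real L / real N ^ 2 + 1 / real N \<le> error_rate \<theta> L N d"
      using d by (simp add: error_rate_def)
    show "d * real L / real N \<le> error_rate \<theta> L N d"
      using d by (simp add: error_rate_def)
  qed simp_all
  finally show ?thesis by (simp add: algebra_simps)
qed

section \<open>Products of site sums\<close>

context
  fixes n :: nat and G G1 G2 G3 :: "nat \<Rightarrow> real \<Rightarrow> real" and M :: real
    and L N :: nat and eta :: "nat \<Rightarrow> nat" and d :: real
  assumes profile: "\<And>k. k < n \<Longrightarrow> C3_profile (G k) (G1 k) (G2 k) (G3 k) M"
    and M: "1 \<le> M" and eta: "eta \<in> Omega L N" and N: "0 < N" and d: "0 \<le> d"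
begin

lemma abs_prod_site_sum_le:
  assumes "S \<subseteq> {..<n}"
  shows "\<bar>\<Prod>k\<in>S. site_sum L N (G k) eta\<bar> \<le> M ^ n"
proof -
  have "\<bar>site_sum L N (G k) eta\<bar> \<le> M" if "k \<in> S" for k
  proof -
    have "k < n" using that assms by auto
    from abs_site_sum_le[OF eta N C3_profile.bound[OF profile[OF this]]] show ?thesis .
  qed
  moreover have "card S \<le> n" using card_mono[OF _ assms] by simp
  ultimately show ?thesis unfolding abs_prod using M by (intro prod_le_power) auto
qed

lemma abs_prod_jump_incr_le:
  assumes "S \<subseteq> {..<n}" "x < L" "y < L" "x \<noteq> y" "1 \<le> eta x"
  shows "\<bar>\<Prod>k\<in>S. jump_incr (G k) N eta x y\<bar> \<le> (4 * M / real N) ^ card S"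
proof -
  have occ: "eta x \<le> N" "eta y + 1 \<le> N"
    using assms Omega_le[OF eta N] Omega_pair_le[OF eta N] by force+
  have "\<bar>jump_incr (G k) N eta x y\<bar> \<le> 4 * M / real N" if "k \<in> S" for k
  proof -
    have "k < n" using that assms(1) by auto
    from C3_profile.abs_diff_down_up_le[OF profile[OF this] N assms(5) occ] show ?thesis
      by (simp add: jump_incr_def)
  qed
  then have "(\<Prod>k\<in>S. \<bar>jump_incr (G k) N eta x y\<bar>) \<le> (\<Prod>k\<in>S. 4 * M / real N)"
    by (intro prod_mono) auto
  then show ?thesis by (simp add: abs_prod)
qed

lemma jump_sum_higher_order_le:
  assumes S: "S \<subseteq> {..<n}" "3 \<le> card S"
  shows "\<bar>jump_sum L d eta (\<lambda>x y. (\<Prod>k\<in>S. jump_incr (G k) N eta x y)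
      * (\<Prod>k\<in>{..<n} - S. site_sum L N (G k) eta))\<bar> \<le> (4 * M) ^ n * M ^ n * error_rate \<theta> L N d"
proof -
  define B where "B = (4 * M) ^ n * M ^ n / real N ^ 3"
  have Nr: "1 \<le> real N" using N by simp
  have "card S \<le> n" using card_mono[OF _ S(1)] by simp
  have "\<bar>jump_sum L d eta (\<lambda>x y. (\<Prod>k\<in>S. jump_incr (G k) N eta x y)
      * (\<Prod>k\<in>{..<n} - S. site_sum L N (G k) eta)) - jump_sum L d eta (\<lambda>_ _. 0)\<bar>
      \<le> jump_sum L d eta (\<lambda>_ _. B)"
  proof (rule jump_sum_abs_diff_le[OF d])
    fix x y assume xy: "x < L" "y < L" "x \<noteq> y" "1 \<le> eta x"
    have "(4 * M / real N) ^ card S = (4 * M) ^ card S / real N ^ card S" by (simp add: power_divide)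
    also have "\<dots> \<le> (4 * M) ^ n / real N ^ 3"
      using M Nr S(2) \<open>card S \<le> n\<close> by (intro frac_le power_increasing) auto
    finally have "\<bar>\<Prod>k\<in>S. jump_incr (G k) N eta x y\<bar> \<le> (4 * M) ^ n / real N ^ 3"
      using abs_prod_jump_incr_le[OF S(1) xy] by linarith
    then have "\<bar>(\<Prod>k\<in>S. jump_incr (G k) N eta x y) * (\<Prod>k\<in>{..<n} - S. site_sum L N (G k) eta)\<bar>
        \<le> (4 * M) ^ n / real N ^ 3 * M ^ n"
      unfolding abs_mult using M by (intro mult_mono abs_prod_site_sum_le) auto
    then show "\<bar>(\<Prod>k\<in>S. jump_incr (G k) N eta x y) * (\<Prod>k\<in>{..<n} - S. site_sum L N (G k) eta) - 0\<bar> \<le> B"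
      by (simp add: B_def)
  qed
  also have "\<dots> \<le> real N * (d * real L + real N) * B"
    using M by (intro jump_sum_const_le[OF eta N d]) (simp add: B_def)
  also have "\<dots> = (4 * M) ^ n * M ^ n * (d * real L / real N ^ 2 + 1 / real N)"
    using N by (simp add: B_def field_simps power2_eq_square power3_eq_cube)
  also have "\<dots> \<le> (4 * M) ^ n * M ^ n * error_rate \<theta> L N d"
  proof (intro mult_left_mono)
    have "d * real L / real N ^ 2 \<le> d * real L / real N"
      using Nr d by (intro divide_left_mono) (auto simp: power2_eq_square)
    then show "d * real L / real N ^ 2 + 1 / real N \<le> error_rate \<theta> L N d"
      using d by (simp add: error_rate_def)
  qed (use M in simp)
  finally show ?thesis by simp
qed

lemma jump_sum_single_approx:
  assumes k: "k < n"
  shows "\<bar>jump_sum L d eta (\<lambda>x y. jump_incr (G k) N eta x y * (\<Prod>j\<in>{..<n} - {k}. site_sum L N (G j) eta))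
      - (emp L N eta (\<lambda>z. (1 - z) * G2 k z - \<theta> * G1 k z) + \<theta> * G1 k 0) * (\<Prod>j\<in>{..<n} - {k}. site_sum L N (G j) eta)\<bar>
    \<le> 3 * M * error_rate \<theta> L N d * M ^ n"
  unfolding jump_sum_mult_right left_diff_distrib[symmetric] abs_mult
  using C3_profile.jump_sum_diff_approx_drift[OF profile[OF k] eta N d] abs_prod_site_sum_le[of "{..<n} - {k}"]
    M error_rate_nonneg[OF d]
  by (intro mult_mono) auto

lemma jump_sum_pair_approx:
  assumes kl: "k < n" "l < n"
  shows "\<bar>jump_sum L d eta (\<lambda>x y. jump_incr (G k) N eta x y * jump_incr (G l) N eta x y
          * (\<Prod>j\<in>{..<n} - {k, l}. site_sum L N (G j) eta))
      - 2 * (emp L N eta (\<lambda>z. G1 k z * G1 l z) - emp L N eta (G1 k) * emp L N eta (G1 l))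
        * (\<Prod>j\<in>{..<n} - {k, l}. site_sum L N (G j) eta)\<bar>
    \<le> 16 * M^2 * error_rate \<theta> L N d * M ^ n"
  unfolding jump_sum_mult_right left_diff_distrib[symmetric] abs_mult
  using jump_sum_product_approx_covariance[OF profile[OF kl(1)] profile[OF kl(2)] eta N d]
    abs_prod_site_sum_le[of "{..<n} - {k, l}"] M error_rate_nonneg[OF d]
  by (intro mult_mono) auto

lemma gen_prod_site_sum_approx:
  "\<bar>gen L d (\<lambda>\<xi>. \<Prod>k<n. site_sum L N (G k) \<xi>) eta
     - (2 * (\<Sum>k<n. \<Sum>l<n. if k < l then (emp L N eta (\<lambda>z. G1 k z * G1 l z) - emp L N eta (G1 k) * emp L N eta (G1 l))
             * (\<Prod>j\<in>{..<n} - {k, l}. site_sum L N (G j) eta) else 0)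
        + (\<Sum>k<n. (emp L N eta (\<lambda>z. (1 - z) * G2 k z - \<theta> * G1 k z) + \<theta> * G1 k 0)
             * (\<Prod>j\<in>{..<n} - {k}. site_sum L N (G j) eta)))\<bar>
   \<le> (3 * real n * M * M ^ n + 16 * real n ^ 2 * M^2 * M ^ n + 2 ^ n * (4 * M) ^ n * M ^ n) * error_rate \<theta> L N d"
proof -
  define T where "T S = jump_sum L d eta (\<lambda>x y. (\<Prod>j\<in>S. jump_incr (G j) N eta x y)
      * (\<Prod>j\<in>{..<n} - S. site_sum L N (G j) eta))" for S
  define P3 where "P3 = {S \<in> Pow {..<n}. 3 \<le> card S}"
  define \<epsilon> where "\<epsilon> = error_rate \<theta> L N d"
  have \<epsilon>: "0 \<le> \<epsilon>" using error_rate_nonneg[OF d] by (simp add: \<epsilon>_def)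
  have "gen L d (\<lambda>\<xi>. \<Prod>k<n. site_sum L N (G k) \<xi>) eta =
      (\<Sum>k<n. T {k}) + (\<Sum>k<n. \<Sum>l<n. if k < l then T {k, l} else 0) + sum T P3"
    unfolding gen_prod_site_sum T_def P3_def by (rule sum_nonempty_subsets_by_card) simp
  moreover have "\<bar>(\<Sum>k<n. T {k}) - (\<Sum>k<n. (emp L N eta (\<lambda>z. (1 - z) * G2 k z - \<theta> * G1 k z) + \<theta> * G1 k 0)
      * (\<Prod>j\<in>{..<n} - {k}. site_sum L N (G j) eta))\<bar> \<le> (\<Sum>k<n. 3 * M * \<epsilon> * M ^ n)"
    unfolding T_def \<epsilon>_def by (intro abs_sum_diff_le) (simp add: jump_sum_single_approx)
  moreover have "\<bar>(\<Sum>k<n. \<Sum>l<n. if k < l then T {k, l} else 0)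
      - (\<Sum>k<n. \<Sum>l<n. if k < l then 2 * (emp L N eta (\<lambda>z. G1 k z * G1 l z) - emp L N eta (G1 k) * emp L N eta (G1 l))
          * (\<Prod>j\<in>{..<n} - {k, l}. site_sum L N (G j) eta) else 0)\<bar> \<le> (\<Sum>k<n. \<Sum>l<n. 16 * M^2 * \<epsilon> * M ^ n)"
  proof (intro abs_sum_diff_le)
    fix k l assume "k \<in> {..<n}" "l \<in> {..<n}"
    then show "\<bar>(if k < l then T {k, l} else 0) - (if k < l then 2 * (emp L N eta (\<lambda>z. G1 k z * G1 l z)
        - emp L N eta (G1 k) * emp L N eta (G1 l)) * (\<Prod>j\<in>{..<n} - {k, l}. site_sum L N (G j) eta) else 0)\<bar>
      \<le> 16 * M^2 * \<epsilon> * M ^ n"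
      using jump_sum_pair_approx[of k l] \<epsilon> M by (auto simp: T_def \<epsilon>_def mult.assoc)
  qed
  moreover have "\<bar>sum T P3\<bar> \<le> 2 ^ n * ((4 * M) ^ n * M ^ n * \<epsilon>)"
  proof -
    have "\<bar>sum T P3 - sum (\<lambda>_. 0) P3\<bar> \<le> (\<Sum>S\<in>P3. (4 * M) ^ n * M ^ n * \<epsilon>)"
    proof (intro abs_sum_diff_le)
      fix S assume "S \<in> P3"
      then show "\<bar>T S - 0\<bar> \<le> (4 * M) ^ n * M ^ n * \<epsilon>"
        using jump_sum_higher_order_le[of S] by (simp add: P3_def T_def \<epsilon>_def)
    qed
    also have "\<dots> \<le> 2 ^ n * ((4 * M) ^ n * M ^ n * \<epsilon>)"
    proof -
      have "card P3 \<le> card (Pow {..<n::nat})" by (rule card_mono) (auto simp: P3_def)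
      then have "real (card P3) \<le> 2 ^ n" by (simp add: card_Pow of_nat_le_iff[symmetric])
      then show ?thesis using M \<epsilon> by (simp add: mult_right_mono)
    qed
    finally show ?thesis by simp
  qed
  ultimately show ?thesis
    unfolding \<epsilon>_def[symmetric] sum_distrib_left
    by (simp add: algebra_simps power2_eq_square if_distrib[of "\<lambda>c. 2 * c"] cong: if_cong)
qed

end

section \<open>Elements of the domain of \<open>\<L>\<^sub>\<theta>\<close>\<close>

lemma Lprod_emp_eq:
  assumes eta: "eta \<in> Omega L N" and N: "0 < N"
    and B: "\<And>k z. k < length hs \<Longrightarrow> z \<in> {0..1} \<Longrightarrow> Bop (hs ! k) z = G1 k z"
    and A: "\<And>k z. k < length hs \<Longrightarrow> z \<in> {0..1} \<Longrightarrow>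
      z * Aop \<theta> (hs ! k) z = z * ((1 - z) * G2 k z - \<theta> * G1 k z + \<theta> * G1 k 0)"
  shows "Lprod \<theta> hs (emp L N eta) =
    2 * (\<Sum>k<length hs. \<Sum>l<length hs. if k < l then
          (emp L N eta (\<lambda>z. G1 k z * G1 l z) - emp L N eta (G1 k) * emp L N eta (G1 l))
          * (\<Prod>j\<in>{..<length hs} - {k, l}. site_sum L N (\<lambda>v. v * (hs ! j) v) eta) else 0)
    + (\<Sum>k<length hs. (emp L N eta (\<lambda>z. (1 - z) * G2 k z - \<theta> * G1 k z) + \<theta> * G1 k 0)
          * (\<Prod>j\<in>{..<length hs} - {k}. site_sum L N (\<lambda>v. v * (hs ! j) v) eta))"
proof -
  have B1: "emp L N eta (Bop (hs ! k)) = emp L N eta (G1 k)"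
    and B2: "emp L N eta (\<lambda>z. Bop (hs ! k) z * Bop (hs ! l) z) = emp L N eta (\<lambda>z. G1 k z * G1 l z)"
    if "k < length hs" "l < length hs" for k l
    using that by (auto intro!: emp_weighted_cong[OF eta N] simp: B)
  have A1: "emp L N eta (Aop \<theta> (hs ! k)) = emp L N eta (\<lambda>z. (1 - z) * G2 k z - \<theta> * G1 k z) + \<theta> * G1 k 0"
    if "k < length hs" for k
    unfolding emp_add_const[OF eta N, symmetric] using that
    by (intro emp_weighted_cong[OF eta N]) (simp add: A)
  show ?thesis
    unfolding Lprod_def emp_eq_site_sum[of L N eta "hs ! _"]
    by (intro arg_cong2[where f="(+)"] arg_cong2[where f="(*)"] refl sum.cong) (auto simp: A1 B1 B2)
qed

lemma gen_prod_emp_approx_Lprod: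
  assumes "\<forall>h\<in>set hs. C3_01 h"
  obtains K where "\<And>L N eta d. eta \<in> Omega L N \<Longrightarrow> 0 < N \<Longrightarrow> 0 \<le> d \<Longrightarrow>
     \<bar>gen L d (\<lambda>\<xi>. prod_list (map (emp L N \<xi>) hs)) eta - Lprod \<theta> hs (emp L N eta)\<bar> \<le> K * error_rate \<theta> L N d"
proof -
  obtain G1 G2 G3 M where profile: "\<And>k. k < length hs \<Longrightarrow> C3_profile (\<lambda>v. v * (hs ! k) v) (G1 k) (G2 k) (G3 k) M"
    and M: "1 \<le> M" and B: "\<And>k z. k < length hs \<Longrightarrow> z \<in> {0..1} \<Longrightarrow> Bop (hs ! k) z = G1 k z"
    and A: "\<And>k \<theta> z. k < length hs \<Longrightarrow> z \<in> {0..1} \<Longrightarrow>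
      z * Aop \<theta> (hs ! k) z = z * ((1 - z) * G2 k z - \<theta> * G1 k z + \<theta> * G1 k 0)"
    using assms by (rule C3_01_list_profiles) blast
  have "gen L d (\<lambda>\<xi>. prod_list (map (emp L N \<xi>) hs)) eta
      = gen L d (\<lambda>\<xi>. \<Prod>k<length hs. site_sum L N (\<lambda>v. v * (hs ! k) v) \<xi>) eta" for L N eta d
    by (simp add: prod_list_map_eq_prod_lessThan emp_eq_site_sum)
  then show ?thesis
    using gen_prod_site_sum_approx[OF profile M] Lprod_emp_eq[OF _ _ B A] by (intro that) simp
qed

lemma gen_linear: "gen L d (\<lambda>\<xi>. a * f \<xi> + g \<xi>) eta = a * gen L d f eta + gen L d g eta"
  unfolding gen_def sum_distrib_left sum.distrib[symmetric]
  by (intro sum.cong refl) (simp add: algebra_simps)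

lemma gen_Hrep_approx_Ltheta:
  assumes "\<forall>(c, hs) \<in> set R. \<forall>h \<in> set hs. C3_01 h"
  shows "\<exists>K. \<forall>L N eta d. eta \<in> Omega L N \<longrightarrow> 0 < N \<longrightarrow> 0 \<le> d \<longrightarrow>
     \<bar>gen L d (\<lambda>\<xi>. Hrep R (emp L N \<xi>)) eta - Ltheta \<theta> R (emp L N eta)\<bar> \<le> K * error_rate \<theta> L N d"
  using assms
proof (induction R)
  case Nil
  show ?case by (intro exI[of _ 0]) (simp add: Hrep_def Ltheta_def gen_eq_jump_sum)
next
  case (Cons p R)
  obtain c hs where p: "p = (c, hs)" by fastforce
  with Cons.prems have "\<forall>h\<in>set hs. C3_01 h" by auto
  then obtain K1 where K1: "\<And>L N eta d. eta \<in> Omega L N \<Longrightarrow> 0 < N \<Longrightarrow> 0 \<le> d \<Longrightarrow>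
     \<bar>gen L d (\<lambda>\<xi>. prod_list (map (emp L N \<xi>) hs)) eta - Lprod \<theta> hs (emp L N eta)\<bar> \<le> K1 * error_rate \<theta> L N d"
    by (rule gen_prod_emp_approx_Lprod[where \<theta>=\<theta>]) blast
  from Cons obtain K2 where K2: "\<forall>L N eta d. eta \<in> Omega L N \<longrightarrow> 0 < N \<longrightarrow> 0 \<le> d \<longrightarrow>
     \<bar>gen L d (\<lambda>\<xi>. Hrep R (emp L N \<xi>)) eta - Ltheta \<theta> R (emp L N eta)\<bar> \<le> K2 * error_rate \<theta> L N d"
    by auto
  show ?case
  proof (intro exI[of _ "\<bar>c\<bar> * K1 + K2"] allI impI)
    fix L N eta d assume a: "eta \<in> Omega L N" "0 < N" "0 \<le> (d::real)"
    define E1 where "E1 = gen L d (\<lambda>\<xi>. prod_list (map (emp L N \<xi>) hs)) eta - Lprod \<theta> hs (emp L N eta)"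
    define E2 where "E2 = gen L d (\<lambda>\<xi>. Hrep R (emp L N \<xi>)) eta - Ltheta \<theta> R (emp L N eta)"
    have "gen L d (\<lambda>\<xi>. Hrep (p # R) (emp L N \<xi>)) eta - Ltheta \<theta> (p # R) (emp L N eta) = c * E1 + E2"
      by (simp add: Hrep_def Ltheta_def p gen_linear E1_def E2_def algebra_simps)
    moreover have "\<bar>c * E1\<bar> \<le> \<bar>c\<bar> * (K1 * error_rate \<theta> L N d)"
      unfolding abs_mult E1_def using K1[OF a] by (intro mult_left_mono) auto
    moreover have "\<bar>E2\<bar> \<le> K2 * error_rate \<theta> L N d" using K2 a by (simp add: E2_def)
    moreover have "(\<bar>c\<bar> * K1 + K2) * error_rate \<theta> L N d = \<bar>c\<bar> * (K1 * error_rate \<theta> L N d) + K2 * error_rate \<theta> L N d"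
      by (simp add: algebra_simps)
    ultimately show "\<bar>gen L d (\<lambda>\<xi>. Hrep (p # R) (emp L N \<xi>)) eta - Ltheta \<theta> (p # R) (emp L N eta)\<bar>
        \<le> (\<bar>c\<bar> * K1 + K2) * error_rate \<theta> L N d"
      using abs_triangle_ineq[of "c * E1" E2] by linarith
  qed
qed

section \<open>Passage to the limit\<close>

lemma error_rate_tendsto_zero:
  assumes d: "(\<lambda>L. d L * real L) \<longlonglongrightarrow> \<theta>"
    and Ls: "filterlim Ls at_top sequentially" and Ns: "filterlim Ns at_top sequentially"
  shows "(\<lambda>n. error_rate \<theta> (Ls n) (Ns n) (d (Ls n))) \<longlonglongrightarrow> 0"
proof -
  have dL: "(\<lambda>n. d (Ls n) * real (Ls n)) \<longlonglongrightarrow> \<theta>"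
    using filterlim_compose[OF d Ls] by simp
  have inv_N: "(\<lambda>n. 1 / real (Ns n)) \<longlonglongrightarrow> 0"
    using tendsto_inverse_0_at_top[OF filterlim_compose[OF filterlim_real_sequentially Ns]]
    by (simp add: inverse_eq_divide)
  have "(\<lambda>L. d L * real L * inverse (real L)) \<longlonglongrightarrow> \<theta> * 0"
    by (rule tendsto_mult[OF d lim_inverse_n])
  moreover have "eventually (\<lambda>L. d L * real L * inverse (real L) = d L) sequentially"
    using eventually_gt_at_top[of 0] by eventually_elim simp
  ultimately have "d \<longlonglongrightarrow> 0" using Lim_transform_eventually by fastforce
  then have "(\<lambda>n. d (Ls n)) \<longlonglongrightarrow> 0" using filterlim_compose[OF _ Ls] by blast
  moreover have "(\<lambda>n. \<bar>d (Ls n) * real (Ls n) - \<theta>\<bar>) \<longlonglongrightarrow> 0"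
    using tendsto_rabs[OF tendsto_diff[OF dL tendsto_const[of \<theta>]]] by simp
  moreover have "(\<lambda>n. d (Ls n) * real (Ls n) * (1 / real (Ns n))) \<longlonglongrightarrow> \<theta> * 0"
    by (rule tendsto_mult[OF dL inv_N])
  ultimately have "(\<lambda>n. 1 / real (Ns n) + \<bar>d (Ls n) * real (Ls n) - \<theta>\<bar> + d (Ls n)
      + d (Ls n) * real (Ls n) * (1 / real (Ns n))) \<longlonglongrightarrow> 0 + 0 + 0 + \<theta> * 0"
    by (intro tendsto_add inv_N)
  then show ?thesis by (simp add: error_rate_def)
qed

lemma SUP_abs_le:
  fixes f :: "'a \<Rightarrow> real"
  assumes "A \<noteq> {}" "\<And>x. x \<in> A \<Longrightarrow> \<bar>f x\<bar> \<le> B"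
  shows "\<bar>SUP x\<in>A. \<bar>f x\<bar>\<bar> \<le> B"
proof -
  obtain x where x: "x \<in> A" using assms(1) by blast
  have "0 \<le> \<bar>f x\<bar>" by simp
  also have "\<dots> \<le> (SUP x\<in>A. \<bar>f x\<bar>)"
    using x assms(2) by (intro cSUP_upper bdd_aboveI2) auto
  finally have "0 \<le> (SUP x\<in>A. \<bar>f x\<bar>)" .
  moreover have "(SUP x\<in>A. \<bar>f x\<bar>) \<le> B" using assms by (intro cSUP_least) auto
  ultimately show ?thesis by simp
qed

theorem proposition2p1:
  fixes \<rho> \<theta> :: real and d :: "nat \<Rightarrow> real"
    and R :: "(real \<times> (real \<Rightarrow> real) list) list"
  assumes "0 < \<rho>" and "0 \<le> \<theta>"
    and "\<forall>L. 0 < d L"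
    and "(\<lambda>L. d L * real L) \<longlonglongrightarrow> \<theta>"
    and "\<forall>(c, hs) \<in> set R. \<forall>h \<in> set hs. C3_01 h"
  shows "\<forall>Ls Ns :: nat \<Rightarrow> nat.
           filterlim Ls at_top sequentially \<longrightarrow> filterlim Ns at_top sequentially \<longrightarrow>
           (\<lambda>n. real (Ns n) / real (Ls n)) \<longlonglongrightarrow> \<rho> \<longrightarrow>
           (\<lambda>n. SUP eta \<in> Omega (Ls n) (Ns n).
              \<bar>gen (Ls n) (d (Ls n)) (\<lambda>\<xi>. Hrep R (emp (Ls n) (Ns n) \<xi>)) eta
               - Ltheta \<theta> R (emp (Ls n) (Ns n) eta)\<bar>) \<longlonglongrightarrow> 0"
proof (intro allI impI)
  fix Ls Ns :: "nat \<Rightarrow> nat"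
  assume Ls: "filterlim Ls at_top sequentially" and Ns: "filterlim Ns at_top sequentially"
  obtain K where K: "\<forall>L N eta d. eta \<in> Omega L N \<longrightarrow> 0 < N \<longrightarrow> 0 \<le> d \<longrightarrow>
     \<bar>gen L d (\<lambda>\<xi>. Hrep R (emp L N \<xi>)) eta - Ltheta \<theta> R (emp L N eta)\<bar> \<le> K * error_rate \<theta> L N d"
    using gen_Hrep_approx_Ltheta[OF assms(5)] by blast
  have "eventually (\<lambda>n. 1 \<le> Ls n) sequentially" "eventually (\<lambda>n. 1 \<le> Ns n) sequentially"
    using Ls Ns by (simp_all add: filterlim_at_top)
  then have "eventually (\<lambda>n. norm (SUP eta \<in> Omega (Ls n) (Ns n).
      \<bar>gen (Ls n) (d (Ls n)) (\<lambda>\<xi>. Hrep R (emp (Ls n) (Ns n) \<xi>)) eta - Ltheta \<theta> R (emp (Ls n) (Ns n) eta)\<bar>)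
      \<le> K * error_rate \<theta> (Ls n) (Ns n) (d (Ls n))) sequentially"
    unfolding real_norm_def
  proof eventually_elim
    case (elim n)
    then show ?case using K assms(3) by (intro SUP_abs_le Omega_nonempty) (auto simp: less_imp_le)
  qed
  then show "(\<lambda>n. SUP eta \<in> Omega (Ls n) (Ns n).
      \<bar>gen (Ls n) (d (Ls n)) (\<lambda>\<xi>. Hrep R (emp (Ls n) (Ns n) \<xi>)) eta - Ltheta \<theta> R (emp (Ls n) (Ns n) eta)\<bar>)
      \<longlonglongrightarrow> 0"
    by (rule Lim_null_comparison)
      (use error_rate_tendsto_zero[OF assms(4) Ls Ns] in \<open>rule tendsto_mult_right_zero\<close>)
qed

end
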